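(* Let $\alpha>2$ and $0<N_1\le N_2$. Consider the two-player Variable-Rate Random Access Game in which player $i\in\{1,2\}$ chooses $\Lambda_i\in[0,N_i]$ and receives payoff \[ U_i(\Lambda_1,\Lambda_2)=\Lambda_i\int_0^\infty e^{-(\Lambda_1+\Lambda_2)x^{2/\alpha}}\frac{dx}{1+x}. \] Define $\Lambda''(\alpha)$, for $\alpha>4$, as the unique solution $\Lambda''>0$ of \[ \int_0^\infty\frac{1-\Lambda'' x^{2/\alpha}}{1+x}\,e^{-2\Lambda'' x^{2/\alpha}}\,dx=0, \] and set $\Lambda''(\alpha)=+\infty$ for $\alpha\le 4$. Let $\hat\Lambda$ denote the unique solution $\Lambda>0$ of \[ \int_0^\infty\frac{1-\Lambda x^{2/\alpha}}{1+x}\,e^{-(N_1+\Lambda)x^{2/\alpha}}\,dx=0. \] Then the game has a unique Nash equilibrium $(\Lambda_1^*,\Lambda_2^* )$, and: (i) (Full/Full reuse) if $N_1\le\Lambda''(\alpha)$ and $N_2\le\hat\Lambda$, then $(\Lambda_1^*,\Lambda_2^* )=(N_1,N_2)$; (ii) (Full/Partial reuse) if $N_1\le\Lambda''(\alpha)$ and $N_2>\hat\Lambda$, then $\Lambda_1^*=N_1$ and $\Lambda_2^*=\hat\Lambda$; (iii) (Partial/Partial reuse) if $N_1>\Lambda''(\alpha)$, then $(\Lambda_1^*,\Lambda_2^* )=(\Lambda''(\alpha),\Lambda''(\alpha))$.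
   Context: A Nash equilibrium is a pair $(\Lambda_1^*,\Lambda_2^* )\in[0,N_1]\times[0,N_2]$ such that $\Lambda_1^*$ maximizes $U_1(\cdot,\Lambda_2^* )$ over $[0,N_1]$ and $\Lambda_2^*$ maximizes $U_2(\Lambda_1^*,\cdot)$ over $[0,N_2]$. *)

theory Defs
  imports "HOL-Analysis.Analysis"
begin

definition vrag_kernel :: "real \<Rightarrow> real \<Rightarrow> real" where
  "vrag_kernel \<alpha> L = (LBINT x:{0..}. exp (- L * x powr (2 / \<alpha>)) / (1 + x))"

definition U1 :: "real \<Rightarrow> real \<Rightarrow> real \<Rightarrow> real" where
  "U1 \<alpha> l1 l2 = l1 * vrag_kernel \<alpha> (l1 + l2)"

definition U2 :: "real \<Rightarrow> real \<Rightarrow> real \<Rightarrow> real" where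
  "U2 \<alpha> l1 l2 = l2 * vrag_kernel \<alpha> (l1 + l2)"

definition is_nash :: "real \<Rightarrow> real \<Rightarrow> real \<Rightarrow> real \<Rightarrow> real \<Rightarrow> bool" where
  "is_nash \<alpha> N1 N2 l1 l2 \<longleftrightarrow>
     l1 \<in> {0..N1} \<and> l2 \<in> {0..N2} \<and>
     (\<forall>m1\<in>{0..N1}. U1 \<alpha> m1 l2 \<le> U1 \<alpha> l1 l2) \<and>
     (\<forall>m2\<in>{0..N2}. U2 \<alpha> l1 m2 \<le> U2 \<alpha> l1 l2)"

definition Lambda_pp :: "real \<Rightarrow> ereal" where
  "Lambda_pp \<alpha> = (if \<alpha> > 4 then
     ereal (THE L. L > 0 \<and>
        (LBINT x:{0..}. (1 - L * x powr (2 / \<alpha>)) / (1 + x) * exp (- 2 * L * x powr (2 / \<alpha>))) = 0)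
   else \<infinity>)"

definition Lambda_hat :: "real \<Rightarrow> real \<Rightarrow> real" where
  "Lambda_hat \<alpha> N1 = (THE L. L > 0 \<and>
     (LBINT x:{0..}. (1 - L * x powr (2 / \<alpha>)) / (1 + x) * exp (- (N1 + L) * x powr (2 / \<alpha>))) = 0)"

end

theory Submission
  imports Defs
begin

text \<open>Write A(S) = vrag_kernel \<alpha> S, so that U_i = \<Lambda>_i A(\<Lambda>_1 + \<Lambda>_2), and B = -A'.
  Against an opponent rate a, the marginal payoff of the rate l is D(a,l) = A(a+l) - l B(a+l).
  An integration by parts gives S (2/\<alpha>) B(S) = C(S), where C carries the weight 1/(1+x)^2
  instead of 1/(1+x). Hence D(a,l) = A(S) - c C(S) with S = a+l and c = (\<alpha>/2) l/S, and the
  integrand (1 - c/(1+x)) exp(-S x^(2/\<alpha>))/(1+x) of A(S) - c C(S) changes sign exactly once,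
  at x* = c - 1. Raising S by h multiplies the integrand by exp(-h x^(2/\<alpha>)), which is below
  exp(-h x*^(2/\<alpha>)) where the integrand is positive and above it where it is negative; so once
  D(a,.) is nonpositive it stays negative, and the same holds for L \<mapsto> D(L,L), where c = \<alpha>/4.
  Thus each payoff is unimodal in the own rate, the best reply to a is min N (\<Lambda>^(a)) with \<Lambda>^(a)
  the root of D(a,.), and D(l2,l1) - D(l1,l2) = (l2 - l1) B(l1 + l2) excludes every mutual
  best reply except the ones listed. For \<alpha> \<le> 4 the symmetric marginal payoff never vanishes.\<close>

lemma powr_mult_exp_le:
  fixes r S t :: real
  assumes "r > 0" "S > 0" "t \<ge> 0"
  shows "t powr r * exp (- S * t) \<le> (r / S) powr r"
proof -
  have "(S/r) * t \<le> exp ((S/r) * t)"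
    using exp_ge_add_one_self[of "(S/r)*t"] by linarith
  hence "t * exp (- (S/r) * t) \<le> r / S"
    using assms by (simp add: exp_minus field_simps)
  moreover have "t powr r * exp (- S * t) = (t * exp (- (S/r) * t)) powr r"
    using assms by (simp add: powr_mult exp_powr_real)
  ultimately show ?thesis
    using assms by (simp add: powr_mono2)
qed

lemma powr_mult_square_exp_le:
  fixes q s :: real
  assumes "q \<ge> 0" "s > 0"
  shows "q powr s * (1 + q powr s)^2 * exp (-q) \<le> 2 * (s powr s + (3 * s) powr (3 * s))"
proof -
  define u where "u = q powr s"
  have u: "u \<ge> 0" "u^2 = q powr (2 * s)"
    unfolding u_def by (simp_all add: power2_eq_square powr_add[symmetric])
  have "(1 + u)^2 \<le> 2 + 2 * u^2"
    using zero_le_power2[of "1 - u"] by (simp add: power2_eq_square algebra_simps)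
  hence "u * (1 + u)^2 * exp (-q) \<le> u * (2 + 2 * u^2) * exp (-q)"
    using u by (intro mult_right_mono mult_left_mono) auto
  also have "\<dots> = 2 * (q powr s * exp (- 1 * q)) + 2 * (q powr (3 * s) * exp (- 1 * q))"
    unfolding u unfolding u_def by (simp add: algebra_simps powr_add[symmetric])
  also have "\<dots> \<le> 2 * ((s/1) powr s) + 2 * ((3 * s / 1) powr (3 * s))"
    using powr_mult_exp_le[of s 1 q] powr_mult_exp_le[of "3 * s" 1 q] assms
    by (intro add_mono mult_left_mono) auto
  finally show ?thesis unfolding u_def by simp
qed

lemma diff_cmult_divide_square:
  fixes c d e :: real
  shows "d \<noteq> 0 \<Longrightarrow> e/d - c * (e/d^2) = (1 - c/d) * (e/d)"
  by (simp add: field_simps power2_eq_square)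

lemma exp_ge_tangent_mult:
  fixes S S' p :: real
  shows "exp (- S * p) * (1 - (S' - S) * p) \<le> exp (- S' * p)"
proof -
  have "exp (- S' * p) = exp (- S * p) * exp (- ((S' - S) * p))"
    by (simp add: exp_add[symmetric] algebra_simps)
  thus ?thesis
    using exp_ge_add_one_self[of "- ((S' - S) * p)"] by (simp add: mult_left_mono)
qed

lemma one_minus_divide_le_affine:
  fixes c x :: real
  assumes c: "c > 1" and x: "x \<ge> 0"
  shows "1 - c/(1+x) \<le> - ((c-1)/(c+1)) + ((1 + (c-1)/(c+1)) / ((c-1)/2)) * x"
proof (cases "x \<le> (c-1)/2")
  case True
  have "c/(1+x) \<ge> c/(1 + (c-1)/2)"
    using x True c by (intro divide_left_mono mult_pos_pos) (auto simp: field_simps)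
  also have "c/(1 + (c-1)/2) = 1 + (c-1)/(c+1)" using c by (simp add: field_simps)
  finally have "1 - c/(1+x) \<le> - ((c-1)/(c+1))" by simp
  moreover have "0 \<le> ((1 + (c-1)/(c+1)) / ((c-1)/2)) * x" using c x by simp
  ultimately show ?thesis by linarith
next
  case False
  have "((1 + (c-1)/(c+1)) / ((c-1)/2)) * x \<ge> ((1 + (c-1)/(c+1)) / ((c-1)/2)) * ((c-1)/2)"
    using False c by (intro mult_left_mono) auto
  also have "((1 + (c-1)/(c+1)) / ((c-1)/2)) * ((c-1)/2) = 1 + (c-1)/(c+1)" using c by simp
  finally have "1 \<le> - ((c-1)/(c+1)) + ((1 + (c-1)/(c+1)) / ((c-1)/2)) * x" by simp
  moreover have "c/(1+x) \<ge> 0" using c x by simp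
  ultimately show ?thesis by linarith
qed

text \<open>The sign pattern behind single crossing: with x* = max 0 (c - 1), the factor
  1 - c/(1+x) and the difference of exponentials change sign at the same point.\<close>

lemma single_crossing_pointwise:
  fixes x h b c :: real
  assumes x: "x \<ge> 0" and h: "h > 0" and b: "b > 0"
  defines "xs \<equiv> max 0 (c - 1)"
  shows "(1 - c/(1+x)) * (exp (- h * xs powr b) - exp (- h * x powr b)) \<ge> 0"
    and "x > xs \<Longrightarrow> (1 - c/(1+x)) * (exp (- h * xs powr b) - exp (- h * x powr b)) > 0"
proof -
  have xs0: "xs \<ge> 0" unfolding xs_def by simp
  have d: "1 + x > 0" using x by simp
  show "(1 - c/(1+x)) * (exp (- h * xs powr b) - exp (- h * x powr b)) \<ge> 0"
  proof (cases "x \<ge> xs")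
    case True
    have "1 - c/(1+x) \<ge> 0" using True d unfolding xs_def by (simp add: field_simps)
    moreover have "xs powr b \<le> x powr b" using True xs0 b by (intro powr_mono2) auto
    ultimately show ?thesis using h by simp
  next
    case False
    hence "xs = c - 1" unfolding xs_def using x by auto
    hence "1 - c/(1+x) < 0" using False d by (simp add: field_simps)
    moreover have "x powr b \<le> xs powr b" using False x b by (intro powr_mono2) auto
    ultimately show ?thesis using h by (simp add: mult_nonpos_nonpos)
  qed
  assume xx: "x > xs"
  have "1 - c/(1+x) > 0" using xx d unfolding xs_def by (simp add: field_simps)
  moreover have "xs powr b < x powr b" using xx xs0 b by (intro powr_less_mono2) auto
  ultimately show "(1 - c/(1+x)) * (exp (- h * xs powr b) - exp (- h * x powr b)) > 0"
    using h by simp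
qed

lemma isCont_if_lipschitz_near:
  fixes f :: "real \<Rightarrow> real"
  assumes e: "e > 0" and b: "\<And>h. \<bar>h\<bar> < e \<Longrightarrow> \<bar>f (x+h) - f x\<bar> \<le> \<bar>h\<bar> * K"
  shows "isCont f x"
proof -
  have ev: "\<forall>\<^sub>F h in at 0. norm (f (x+h) - f x) \<le> \<bar>h\<bar> * K"
    unfolding eventually_at using e b by (auto simp: dist_real_def)
  have "((\<lambda>h. \<bar>h\<bar> * K) \<longlongrightarrow> \<bar>0\<bar> * K) (at (0::real))"
    by (intro tendsto_intros)
  hence "((\<lambda>h. f (x+h) - f x) \<longlongrightarrow> 0) (at 0)"
    by (intro Lim_null_comparison[OF ev]) simp
  thus ?thesis unfolding isCont_iff LIM_zero_iff .
qed

lemma unique_root_if_single_crossing: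
  fixes f :: "real \<Rightarrow> real"
  assumes cont: "\<And>l. l > 0 \<Longrightarrow> isCont f l"
    and cross: "\<And>l0 l. 0 < l0 \<Longrightarrow> l0 < l \<Longrightarrow> f l0 \<le> 0 \<Longrightarrow> f l < 0"
    and pos: "p > 0" "f p > 0" and neg: "n > 0" "f n < 0"
  shows "\<exists>!r. r > 0 \<and> f r = 0"
proof -
  have "p < n"
    using cross[of n p] pos neg by (cases "p < n") (auto simp: not_less order.order_iff_strict)
  then obtain r where "p \<le> r" "r \<le> n" "f r = 0"
    using IVT2[of f n 0 p] pos neg cont by force
  moreover have "r' = r" if "r' > 0" "f r' = 0" "r > 0" "f r = 0" for r'
    using cross[of r' r] cross[of r r'] that by (cases r' r rule: linorder_cases) auto
  ultimately show ?thesis using pos by (intro ex1I[of _ r]) auto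
qed

lemma ex1_pair_if_unique:
  assumes "\<And>x y. P x y \<longleftrightarrow> x = a \<and> y = b"
  shows "\<exists>!p. P (fst p) (snd p)"
  using assms by (intro ex1I[of _ "(a, b)"]) (auto simp: prod_eq_iff)

subsection \<open>Integrals over the half-line\<close>

lemma set_integral_mono_set:
  fixes g :: "real \<Rightarrow> real"
  assumes int: "set_integrable lborel B g" and AB: "A \<subseteq> B" and A: "A \<in> sets lborel"
    and nn: "\<And>x. x \<in> B \<Longrightarrow> g x \<ge> 0"
  shows "(LBINT x:A. g x) \<le> (LBINT x:B. g x)"
proof -
  have "set_integrable lborel A g" by (rule set_integrable_subset[OF int A AB])
  thus ?thesis
    unfolding set_lebesgue_integral_def using int AB unfolding set_integrable_def
    by (intro integral_mono) (auto simp: indicator_def nn)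
qed

lemma set_integral_inverse_shift_square:
  fixes t :: real
  assumes t: "t > 0"
  shows "set_integrable lborel {0..} (\<lambda>x. 1/(t+x)^2)"
    and "(LBINT x:{0..}. 1/(t+x)^2) \<le> 2/t"
proof -
  note FTC = interval_integral_FTC_nonneg[where a="ereal (-t/2)" and b=\<infinity> and F="\<lambda>x. - 1/(t+x)"
     and f="\<lambda>x. 1/(t+x)^2" and A="-2/t" and B=0]
  have deriv: "DERIV (\<lambda>x. - 1/(t+x)) x :> 1/(t+x)^2" if "ereal (-t/2) < ereal x" for x
    using that t by (auto intro!: derivative_eq_intros simp: power2_eq_square)
  have cont: "isCont (\<lambda>x. 1/(t+x)^2) x" if "ereal (-t/2) < ereal x" for x
    using that t by (intro continuous_intros) auto
  have "((\<lambda>x. - 1/(t+x)) \<longlongrightarrow> - 1/(t + (-t/2))) (at_right (-t/2))"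
    using t by (intro tendsto_intros) auto
  hence lower: "(((\<lambda>x. - 1/(t+x)) \<circ> real_of_ereal) \<longlongrightarrow> -2/t) (at_right (ereal (-t/2)))"
    unfolding ereal_tendsto_simps by simp
  have "filterlim (\<lambda>x. t + x) at_top at_top"
    by (rule filterlim_tendsto_add_at_top[OF tendsto_const filterlim_ident])
  hence "((\<lambda>x. - 1/(t+x)) \<longlongrightarrow> 0) at_top"
    by (intro tendsto_divide_0[OF tendsto_const] filterlim_at_top_imp_at_infinity)
  hence upper: "(((\<lambda>x. - 1/(t+x)) \<circ> real_of_ereal) \<longlongrightarrow> 0) (at_left \<infinity>)"
    unfolding ereal_tendsto_simps .
  note FTC = FTC[OF _ deriv cont _ lower upper, simplified]
  have I: "set_integrable lborel {-t/2<..} (\<lambda>x. 1/(t+x)^2)"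
    using FTC(1) by (simp add: einterval_eq_Ici)
  show "set_integrable lborel {0..} (\<lambda>x. 1/(t+x)^2)"
    by (rule set_integrable_subset[OF I]) (use t in auto)
  have "(LBINT x:{0..}. 1/(t+x)^2) \<le> (LBINT x:{-t/2<..}. 1/(t+x)^2)"
    by (rule set_integral_mono_set[OF I]) (use t in auto)
  also have "\<dots> = 2/t"
    using FTC(2) unfolding interval_integral_to_infinity_eq by simp
  finally show "(LBINT x:{0..}. 1/(t+x)^2) \<le> 2/t" .
qed

lemma interval_integral_0_infty_eq_set_integral_Ici:
  fixes f :: "real \<Rightarrow> real"
  assumes f: "continuous_on {0..} f"
  shows "(LBINT x=0..\<infinity>. f x) = (LBINT x:{0..}. f x)"
  unfolding interval_lebesgue_integral_0_infty(2)
proof (rule set_integral_cong_set)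
  have "continuous_on {0<..} f" using f by (rule continuous_on_subset) auto
  thus "set_borel_measurable lborel {0<..} f" "set_borel_measurable lborel {0..} f"
    using set_measurable_continuous_on[of "{0<..}" f] set_measurable_continuous_on[of "{0..}" f] f
    unfolding set_borel_measurable_def by auto
  show "AE x in lborel. ((x::real) \<in> {0..}) = (x \<in> {0<..})"
    by (rule eventually_mono[OF AE_lborel_singleton[of "0::real"]]) (auto simp: less_le)
qed

lemma set_integrable_Ici_if_decay:
  fixes f :: "real \<Rightarrow> real"
  assumes "continuous_on {0..} f" and "\<And>x. x \<ge> 0 \<Longrightarrow> \<bar>f x\<bar> * (1 + x)^2 \<le> M"
  shows "set_integrable lborel {0..} f"
proof (rule set_integrable_bound)
  show "set_integrable lborel {0..} (\<lambda>x. M * (1 / (1 + x)^2))"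
    using set_integral_inverse_shift_square(1)[of 1] by (intro set_integrable_mult_right) simp
  show "set_borel_measurable lborel {0..} f"
    using assms(1) set_measurable_continuous_on[of "{0..}" f]
    unfolding set_borel_measurable_def by simp
  show "AE x in lborel. x \<in> {0..} \<longrightarrow> norm (f x) \<le> norm (M * (1 / (1 + x)^2))"
  proof (intro AE_I2 impI)
    fix x :: real assume "x \<in> {0..}"
    hence x: "x \<ge> 0" by simp
    have "\<bar>f x\<bar> \<le> M / (1 + x)^2" using assms(2)[OF x] x by (simp add: field_simps)
    also have "\<dots> \<le> \<bar>M\<bar> / (1 + x)^2" by (intro divide_right_mono) auto
    finally show "norm (f x) \<le> norm (M * (1 / (1 + x)^2))" by simp
  qed
qed

lemma set_integral_Ici_pos:
  fixes f :: "real \<Rightarrow> real"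
  assumes int: "set_integrable lborel {0..} f" and nn: "\<And>x. x \<ge> 0 \<Longrightarrow> f x \<ge> 0"
    and c: "c \<ge> 0" and pos: "\<And>x. x > c \<Longrightarrow> f x > 0"
  shows "(LBINT x:{0..}. f x) > 0"
proof -
  let ?g = "\<lambda>x. indicator {0..} x *\<^sub>R f x"
  have ig: "integrable lborel ?g" using int by (simp add: set_integrable_def)
  have nng: "AE x in lborel. 0 \<le> ?g x" using nn by (intro AE_I2) (auto simp: indicator_def)
  have "integral\<^sup>L lborel ?g \<noteq> 0"
  proof
    assume "integral\<^sup>L lborel ?g = 0"
    hence "AE x in lborel. ?g x = 0" using integral_nonneg_eq_0_iff_AE[OF ig nng] by simp
    then obtain N where N: "{x \<in> space lborel. \<not> ?g x = 0} \<subseteq> N" "emeasure lborel N = 0"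
      "N \<in> sets lborel"
      by (rule AE_E)
    have "{c<..<c+1} \<subseteq> N"
      using N(1) pos c by (force simp: indicator_def)
    hence "emeasure lborel {c<..<c+1} \<le> emeasure lborel N" using N(3) by (rule emeasure_mono)
    thus False using N(2) by simp
  qed
  moreover have "0 \<le> integral\<^sup>L lborel ?g" using nng by (intro integral_nonneg_AE) auto
  ultimately show ?thesis by (simp add: set_lebesgue_integral_def)
qed

lemma set_integral_Icc_le_Ici:
  fixes f g :: "real \<Rightarrow> real"
  assumes int: "set_integrable lborel {0..} f" and R: "R \<ge> 0" and g: "continuous_on {0..R} g"
    and fnn: "\<And>x. x \<ge> 0 \<Longrightarrow> f x \<ge> 0" and gf: "\<And>x. 0 \<le> x \<Longrightarrow> x \<le> R \<Longrightarrow> g x \<le> f x"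
  shows "(LBINT x:{0..R}. g x) \<le> (LBINT x:{0..}. f x)"
proof -
  have intR: "set_integrable lborel {0..R} f" by (rule set_integrable_subset[OF int]) auto
  have "(LBINT x:{0..R}. g x) \<le> (LBINT x:{0..R}. f x)"
    by (rule set_integral_mono[OF borel_integrable_atLeastAtMost'[OF g] intR]) (use gf in auto)
  also have "\<dots> \<le> (LBINT x:{0..}. f x)"
    by (rule set_integral_mono_set[OF int]) (auto simp: fnn)
  finally show ?thesis .
qed

lemma set_integral_inverse_1_plus:
  fixes R :: real
  assumes R: "R \<ge> 0"
  shows "(LBINT x:{0..R}. 1/(1+x)) = ln (1+R)"
proof -
  have "(LBINT x=ereal 0..ereal R. 1/(1+x)) = ln (1+R) - ln (1+0)"
  proof (rule interval_integral_FTC_finite)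
    show "continuous_on {min 0 R..max 0 R} (\<lambda>x::real. 1/(1+x))"
      using R by (intro continuous_intros) auto
    fix x :: real assume "min 0 R \<le> x" "x \<le> max 0 R"
    hence "((\<lambda>x. ln (1+x)) has_real_derivative 1/(1+x)) (at x)"
      using R by (auto intro!: derivative_eq_intros)
    thus "((\<lambda>x. ln (1+x)) has_vector_derivative 1/(1+x)) (at x within {min 0 R..max 0 R})"
      by (simp add: has_real_derivative_iff_has_vector_derivative has_vector_derivative_at_within)
  qed
  thus ?thesis using interval_integral_Icc[of 0 R "\<lambda>x. 1/(1+x)"] R by simp
qed

lemma set_integral_diff_cmult:
  fixes f g :: "real \<Rightarrow> real"
  assumes "set_integrable lborel A f" "set_integrable lborel A g"
  shows "set_integrable lborel A (\<lambda>x. f x - c * g x)"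
    and "(LBINT x:A. f x - c * g x) = (LBINT x:A. f x) - c * (LBINT x:A. g x)"
  using set_integral_diff[OF assms(1) set_integrable_mult_right[OF assms(2), of c]] by simp_all

lemma set_integral_cmult_diff:
  fixes f g :: "real \<Rightarrow> real"
  assumes "set_integrable lborel A f" "set_integrable lborel A g"
  shows "set_integrable lborel A (\<lambda>x. c * f x - g x)"
    and "(LBINT x:A. c * f x - g x) = c * (LBINT x:A. f x) - (LBINT x:A. g x)"
  using set_integral_diff[OF set_integrable_mult_right[OF assms(1), of c] assms(2)] by simp_all

subsection \<open>The kernels\<close>

text \<open>In the notation of the proof sketch, vrag_moment is B, vrag_kernel_sq is C and
  marginal_payoff is D.\<close>

definition vrag_moment :: "real \<Rightarrow> real \<Rightarrow> real" where
  "vrag_moment \<alpha> S = (LBINT x:{0..}. x powr (2/\<alpha>) * exp (- S * x powr (2/\<alpha>)) / (1+x))"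

definition vrag_kernel_sq :: "real \<Rightarrow> real \<Rightarrow> real" where
  "vrag_kernel_sq \<alpha> S = (LBINT x:{0..}. exp (- S * x powr (2/\<alpha>)) / (1+x)^2)"

definition vrag_moment_sq :: "real \<Rightarrow> real \<Rightarrow> real" where
  "vrag_moment_sq \<alpha> S = (LBINT x:{0..}. x powr (2/\<alpha>) * exp (- S * x powr (2/\<alpha>)) / (1+x)^2)"

definition vrag_comb :: "real \<Rightarrow> real \<Rightarrow> real \<Rightarrow> real" where
  "vrag_comb \<alpha> S c = vrag_kernel \<alpha> S - c * vrag_kernel_sq \<alpha> S"

definition marginal_payoff :: "real \<Rightarrow> real \<Rightarrow> real \<Rightarrow> real" where
  "marginal_payoff \<alpha> a l = vrag_kernel \<alpha> (a+l) - l * vrag_moment \<alpha> (a+l)"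

lemma marginal_payoff_swap:
  "marginal_payoff \<alpha> l2 l1 - marginal_payoff \<alpha> l1 l2 = (l2 - l1) * vrag_moment \<alpha> (l1 + l2)"
  unfolding marginal_payoff_def by (simp add: add.commute algebra_simps)

locale path_loss_exponent =
  fixes \<alpha> :: real
  assumes \<alpha>_pos: "\<alpha> > 0"
begin

lemma continuous_on_powr_exponent: "continuous_on {0..} (\<lambda>x::real. x powr (2/\<alpha>))"
  using \<alpha>_pos by (intro continuous_on_powr') (auto intro: continuous_intros)

lemma powr_exponent_inverse: "x \<ge> 0 \<Longrightarrow> (x powr (2/\<alpha>)) powr (\<alpha>/2) = x"
  using \<alpha>_pos by (simp add: powr_powr)

lemma set_integrable_vrag_kernel:
  assumes "S > 0"
  shows "set_integrable lborel {0..} (\<lambda>x. exp (- S * x powr (2/\<alpha>)) / (1+x))"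
proof (rule set_integrable_Ici_if_decay)
  show "continuous_on {0..} (\<lambda>x. exp (- S * x powr (2/\<alpha>)) / (1+x))"
    by (intro continuous_intros continuous_on_powr_exponent) auto
  fix x :: real assume x: "x \<ge> 0"
  let ?p = "x powr (2/\<alpha>)"
  have "\<bar>exp (- S * ?p) / (1+x)\<bar> * (1+x)^2 = (1+x) * exp (- S * ?p)"
    using x by (simp add: power2_eq_square)
  also have "\<dots> = exp (- S * ?p) + ?p powr (\<alpha>/2) * exp (- S * ?p)"
    using x powr_exponent_inverse by (simp add: algebra_simps)
  also have "\<dots> \<le> 1 + ((\<alpha>/2)/S) powr (\<alpha>/2)"
    using powr_mult_exp_le[of "\<alpha>/2" S ?p] \<alpha>_pos assms by (intro add_mono) auto
  finally show "\<bar>exp (- S * ?p) / (1+x)\<bar> * (1+x)^2 \<le> 1 + ((\<alpha>/2)/S) powr (\<alpha>/2)" .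
qed

lemma set_integrable_vrag_moment:
  assumes "S > 0"
  shows "set_integrable lborel {0..} (\<lambda>x. x powr (2/\<alpha>) * exp (- S * x powr (2/\<alpha>)) / (1+x))"
proof (rule set_integrable_Ici_if_decay)
  show "continuous_on {0..} (\<lambda>x. x powr (2/\<alpha>) * exp (- S * x powr (2/\<alpha>)) / (1+x))"
    by (intro continuous_intros continuous_on_powr_exponent) auto
  fix x :: real assume x: "x \<ge> 0"
  let ?p = "x powr (2/\<alpha>)"
  have "\<bar>?p * exp (- S * ?p) / (1+x)\<bar> * (1+x)^2 = (1+x) * (?p * exp (- S * ?p))"
    using x by (simp add: power2_eq_square)
  also have "\<dots> = ?p powr 1 * exp (- S * ?p) + ?p powr (\<alpha>/2 + 1) * exp (- S * ?p)"
    using x powr_exponent_inverse by (simp add: algebra_simps powr_add)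
  also have "\<dots> \<le> (1/S) powr 1 + ((\<alpha>/2+1)/S) powr (\<alpha>/2+1)"
    using powr_mult_exp_le[of "\<alpha>/2+1" S ?p] powr_mult_exp_le[of 1 S ?p] \<alpha>_pos assms
    by (intro add_mono) auto
  finally show "\<bar>?p * exp (- S * ?p) / (1+x)\<bar> * (1+x)^2 \<le> (1/S) powr 1 + ((\<alpha>/2+1)/S) powr (\<alpha>/2+1)" .
qed

lemma set_integrable_vrag_kernel_sq:
  assumes "S \<ge> 0"
  shows "set_integrable lborel {0..} (\<lambda>x. exp (- S * x powr (2/\<alpha>)) / (1+x)^2)"
proof (rule set_integrable_Ici_if_decay)
  show "continuous_on {0..} (\<lambda>x. exp (- S * x powr (2/\<alpha>)) / (1+x)^2)"
    by (intro continuous_intros continuous_on_powr_exponent) auto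
  fix x :: real assume "x \<ge> 0"
  thus "\<bar>exp (- S * x powr (2/\<alpha>)) / (1+x)^2\<bar> * (1+x)^2 \<le> 1" using assms by simp
qed

lemma set_integrable_vrag_moment_sq:
  assumes "S > 0"
  shows "set_integrable lborel {0..} (\<lambda>x. x powr (2/\<alpha>) * exp (- S * x powr (2/\<alpha>)) / (1+x)^2)"
proof (rule set_integrable_bound[OF set_integrable_vrag_moment[OF assms]])
  show "set_borel_measurable lborel {0..} (\<lambda>x. x powr (2/\<alpha>) * exp (- S * x powr (2/\<alpha>)) / (1+x)^2)"
    using set_measurable_continuous_on[of "{0..}" "\<lambda>x. x powr (2/\<alpha>) * exp (- S * x powr (2/\<alpha>)) / (1+x)^2"]
    unfolding set_borel_measurable_def by (simp add: continuous_intros continuous_on_powr_exponent)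
  show "AE x in lborel. x \<in> {0..} \<longrightarrow> norm (x powr (2/\<alpha>) * exp (- S * x powr (2/\<alpha>)) / (1+x)^2)
     \<le> norm (x powr (2/\<alpha>) * exp (- S * x powr (2/\<alpha>)) / (1+x))"
    by (intro AE_I2 impI) (auto intro!: divide_left_mono simp: power2_eq_square)
qed

lemma vrag_kernel_pos: "S > 0 \<Longrightarrow> vrag_kernel \<alpha> S > 0"
  unfolding vrag_kernel_def
  by (rule set_integral_Ici_pos[OF set_integrable_vrag_kernel, of S 0]) auto

lemma vrag_moment_pos: "S > 0 \<Longrightarrow> vrag_moment \<alpha> S > 0"
  unfolding vrag_moment_def
  by (rule set_integral_Ici_pos[OF set_integrable_vrag_moment, of S 0]) auto

lemma vrag_kernel_sq_pos: "S \<ge> 0 \<Longrightarrow> vrag_kernel_sq \<alpha> S > 0"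
  unfolding vrag_kernel_sq_def
  by (rule set_integral_Ici_pos[OF set_integrable_vrag_kernel_sq, of S 0]) auto

lemma vrag_moment_sq_le: "S > 0 \<Longrightarrow> vrag_moment_sq \<alpha> S \<le> vrag_moment \<alpha> S"
  unfolding vrag_moment_sq_def vrag_moment_def
  by (rule set_integral_mono[OF set_integrable_vrag_moment_sq set_integrable_vrag_moment])
     (auto intro!: divide_left_mono simp: power2_eq_square)

lemma vrag_kernel_antimono: "0 < S \<Longrightarrow> S \<le> S' \<Longrightarrow> vrag_kernel \<alpha> S' \<le> vrag_kernel \<alpha> S"
  unfolding vrag_kernel_def
  by (rule set_integral_mono[OF set_integrable_vrag_kernel set_integrable_vrag_kernel])
     (auto intro!: divide_right_mono mult_right_mono)

lemma vrag_moment_antimono: "0 < S \<Longrightarrow> S \<le> S' \<Longrightarrow> vrag_moment \<alpha> S' \<le> vrag_moment \<alpha> S"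
  unfolding vrag_moment_def
  by (rule set_integral_mono[OF set_integrable_vrag_moment set_integrable_vrag_moment])
     (auto intro!: divide_right_mono mult_left_mono mult_right_mono)

lemma vrag_kernel_sq_antimono: "0 \<le> S \<Longrightarrow> S \<le> S' \<Longrightarrow> vrag_kernel_sq \<alpha> S' \<le> vrag_kernel_sq \<alpha> S"
  unfolding vrag_kernel_sq_def
  by (rule set_integral_mono[OF set_integrable_vrag_kernel_sq set_integrable_vrag_kernel_sq])
     (auto intro!: divide_right_mono mult_right_mono)

lemma vrag_kernel_ge_tangent:
  assumes S: "S > 0" and S': "S' > 0"
  shows "vrag_kernel \<alpha> S - (S' - S) * vrag_moment \<alpha> S \<le> vrag_kernel \<alpha> S'"
proof -
  let ?p = "\<lambda>x. x powr (2/\<alpha>)"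
  have "vrag_kernel \<alpha> S - (S' - S) * vrag_moment \<alpha> S =
    (LBINT x:{0..}. exp (- S * ?p x) / (1+x) - (S' - S) * (?p x * exp (- S * ?p x) / (1+x)))"
    unfolding vrag_kernel_def vrag_moment_def
    by (rule set_integral_diff_cmult(2)[symmetric, OF set_integrable_vrag_kernel[OF S] set_integrable_vrag_moment[OF S]])
  also have "\<dots> \<le> vrag_kernel \<alpha> S'"
    unfolding vrag_kernel_def
  proof (rule set_integral_mono[OF set_integral_diff_cmult(1) set_integrable_vrag_kernel[OF S']])
    fix x :: real assume "x \<in> {0..}"
    hence "exp (- S * ?p x) / (1+x) - (S' - S) * (?p x * exp (- S * ?p x) / (1+x))
        = exp (- S * ?p x) * (1 - (S' - S) * ?p x) / (1+x)"
      by (simp add: algebra_simps diff_divide_distrib add_divide_distrib)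
    also have "\<dots> \<le> exp (- S' * ?p x) / (1+x)"
      using exp_ge_tangent_mult \<open>x \<in> {0..}\<close> by (intro divide_right_mono) auto
    finally show "exp (- S * ?p x) / (1+x) - (S' - S) * (?p x * exp (- S * ?p x) / (1+x))
        \<le> exp (- S' * ?p x) / (1+x)" .
  qed (use set_integrable_vrag_kernel[OF S] set_integrable_vrag_moment[OF S] in auto)
  finally show ?thesis .
qed

lemma vrag_kernel_sq_ge_tangent:
  assumes S: "S > 0" and S': "S' \<ge> 0"
  shows "vrag_kernel_sq \<alpha> S - (S' - S) * vrag_moment_sq \<alpha> S \<le> vrag_kernel_sq \<alpha> S'"
proof -
  let ?p = "\<lambda>x. x powr (2/\<alpha>)"
  have int: "set_integrable lborel {0..} (\<lambda>x. exp (- S * ?p x) / (1+x)^2)"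
    using S by (intro set_integrable_vrag_kernel_sq) simp
  have "vrag_kernel_sq \<alpha> S - (S' - S) * vrag_moment_sq \<alpha> S =
    (LBINT x:{0..}. exp (- S * ?p x) / (1+x)^2 - (S' - S) * (?p x * exp (- S * ?p x) / (1+x)^2))"
    unfolding vrag_kernel_sq_def vrag_moment_sq_def
    by (rule set_integral_diff_cmult(2)[symmetric, OF int set_integrable_vrag_moment_sq[OF S]])
  also have "\<dots> \<le> vrag_kernel_sq \<alpha> S'"
    unfolding vrag_kernel_sq_def
  proof (rule set_integral_mono[OF set_integral_diff_cmult(1) set_integrable_vrag_kernel_sq[OF S']])
    fix x :: real assume "x \<in> {0..}"
    have "exp (- S * ?p x) / (1+x)^2 - (S' - S) * (?p x * exp (- S * ?p x) / (1+x)^2)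
        = exp (- S * ?p x) * (1 - (S' - S) * ?p x) / (1+x)^2"
      by (simp add: algebra_simps diff_divide_distrib add_divide_distrib)
    also have "\<dots> \<le> exp (- S' * ?p x) / (1+x)^2"
      using exp_ge_tangent_mult by (intro divide_right_mono) auto
    finally show "exp (- S * ?p x) / (1+x)^2 - (S' - S) * (?p x * exp (- S * ?p x) / (1+x)^2)
        \<le> exp (- S' * ?p x) / (1+x)^2" .
  qed (use int set_integrable_vrag_moment_sq[OF S] in auto)
  finally show ?thesis .
qed

lemma has_real_derivative_ratio_exp:
  assumes x: "x > 0"
  shows "((\<lambda>x. x/(1+x) * exp (- S * x powr (2/\<alpha>))) has_real_derivative
     exp (- S * x powr (2/\<alpha>)) / (1+x)^2
       - (S*(2/\<alpha>)) * (x powr (2/\<alpha>) * exp (- S * x powr (2/\<alpha>)) / (1+x))) (at x)"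
proof -
  let ?E = "exp (- S * x powr (2/\<alpha>))"
  have "((\<lambda>x. x powr (2/\<alpha>)) has_real_derivative (2/\<alpha>) * (x powr (2/\<alpha>) / x)) (at x)"
    using has_real_derivative_powr[OF x, of "2/\<alpha>"] x by (simp add: powr_diff)
  from DERIV_fun_exp[OF DERIV_cmult[OF this, of "- S"]]
  have "((\<lambda>x. exp (- S * x powr (2/\<alpha>))) has_real_derivative ?E * (- S * ((2/\<alpha>) * (x powr (2/\<alpha>) / x)))) (at x)"
    by simp
  moreover have "((\<lambda>x. x/(1+x)) has_real_derivative 1/(1+x)^2) (at x)"
    using x by (auto intro!: derivative_eq_intros simp: field_simps power2_eq_square)
  ultimately have "((\<lambda>x. x/(1+x) * exp (- S * x powr (2/\<alpha>))) has_real_derivative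
      1/(1+x)^2 * ?E + ?E * (- S * ((2/\<alpha>) * (x powr (2/\<alpha>) / x))) * (x/(1+x))) (at x)"
    using DERIV_mult by blast
  moreover have "1/(1+x)^2 * ?E + ?E * (- S * ((2/\<alpha>) * (x powr (2/\<alpha>) / x))) * (x/(1+x))
      = ?E / (1+x)^2 - (S*(2/\<alpha>)) * (x powr (2/\<alpha>) * ?E / (1+x))"
    using x \<alpha>_pos by (simp add: divide_simps)
  ultimately show ?thesis by simp
qed

lemma ratio_exp_tendsto_0:
  assumes S: "S > 0"
  shows "((\<lambda>x. x/(1+x) * exp (- S * x powr (2/\<alpha>))) \<longlongrightarrow> 0) at_top"
proof -
  let ?p = "\<lambda>x. x powr (2/\<alpha>)"
  define K where "K = ((\<alpha>/2)/S) powr (\<alpha>/2)"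
  have "\<forall>\<^sub>F x in at_top. norm (x/(1+x) * exp (- S * ?p x)) \<le> K / x"
    using eventually_gt_at_top[of 0]
  proof eventually_elim
    case (elim x)
    have "x * exp (- S * ?p x) = ?p x powr (\<alpha>/2) * exp (- S * ?p x)"
      using elim powr_exponent_inverse by simp
    also have "\<dots> \<le> K" unfolding K_def using powr_mult_exp_le[of "\<alpha>/2" S "?p x"] \<alpha>_pos S by auto
    finally have "exp (- S * ?p x) \<le> K / x" using elim by (simp add: field_simps)
    moreover have "norm (x/(1+x) * exp (- S * ?p x)) = x/(1+x) * exp (- S * ?p x)" using elim by simp
    moreover have "\<dots> \<le> 1 * exp (- S * ?p x)" using elim by (intro mult_right_mono) auto
    ultimately show ?case by linarith
  qed
  moreover have "((\<lambda>x. K / x) \<longlongrightarrow> 0) at_top"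
    by (intro tendsto_divide_0[OF tendsto_const] filterlim_at_top_imp_at_infinity filterlim_ident)
  ultimately show ?thesis by (rule Lim_null_comparison)
qed

text \<open>The integration by parts S (2/\<alpha>) B(S) = C(S); the boundary terms vanish because
  x/(1+x) is 0 at 0 and exp(-S x^(2/\<alpha>)) decays faster than 1/x.\<close>

lemma vrag_kernel_sq_eq:
  assumes S: "S > 0"
  shows "vrag_kernel_sq \<alpha> S = S * (2/\<alpha>) * vrag_moment \<alpha> S"
proof -
  let ?p = "\<lambda>x. x powr (2/\<alpha>)"
  let ?F = "\<lambda>x. x/(1+x) * exp (- S * ?p x)"
  let ?f = "\<lambda>x. exp (- S * ?p x) / (1+x)^2 - (S*(2/\<alpha>)) * (?p x * exp (- S * ?p x) / (1+x))"
  have intf: "set_integrable lborel {0..} ?f"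
    using S by (intro set_integral_diff_cmult(1) set_integrable_vrag_kernel_sq set_integrable_vrag_moment) auto
  have contf: "continuous_on {0..} ?f"
    by (intro continuous_intros continuous_on_powr_exponent) auto
  have FTC: "(LBINT x=0..\<infinity>. ?f x) = 0 - 0"
  proof (rule interval_integral_FTC_integrable)
    fix x :: real assume "0 < ereal x"
    hence x: "x > 0" by simp
    show "(?F has_vector_derivative ?f x) (at x)"
      using has_real_derivative_ratio_exp[OF x, of S]
      unfolding has_real_derivative_iff_has_vector_derivative .
    have "continuous_on {0<..} ?f" using contf by (rule continuous_on_subset) auto
    thus "isCont ?f x" using x continuous_on_eq_continuous_at[of "{0<..}" ?f] by auto
  next
    have "set_integrable lborel {0<..} ?f" by (rule set_integrable_subset[OF intf]) auto
    moreover have "einterval 0 \<infinity> = {0::real<..}"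
      using einterval_eq_Ici[of 0] by (simp add: zero_ereal_def)
    ultimately show "set_integrable lborel (einterval 0 \<infinity>) ?f" by simp
  next
    have "continuous_on {0..} ?F"
      by (intro continuous_intros continuous_on_powr_exponent) auto
    hence "(?F \<longlongrightarrow> ?F 0) (at 0 within {0..})"
      unfolding continuous_on_def by (rule bspec) simp
    hence "(?F \<longlongrightarrow> ?F 0) (at_right 0)"
      by (rule tendsto_within_subset) auto
    thus "((?F \<circ> real_of_ereal) \<longlongrightarrow> 0) (at_right 0)"
      by (simp add: zero_ereal_def ereal_tendsto_simps)
  next
    have "(?F \<longlongrightarrow> 0) at_top" by (rule ratio_exp_tendsto_0[OF S])
    thus "((?F \<circ> real_of_ereal) \<longlongrightarrow> 0) (at_left \<infinity>)"
      by (simp add: ereal_tendsto_simps)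
  qed simp
  have "(LBINT x=0..\<infinity>. ?f x) = (LBINT x:{0..}. ?f x)"
    by (rule interval_integral_0_infty_eq_set_integral_Ici[OF contf])
  also have "\<dots> = vrag_kernel_sq \<alpha> S - (S*(2/\<alpha>)) * vrag_moment \<alpha> S"
    unfolding vrag_kernel_sq_def vrag_moment_def
    by (rule set_integral_diff_cmult(2)[OF set_integrable_vrag_kernel_sq set_integrable_vrag_moment[OF S]])
       (use S in auto)
  finally show ?thesis using FTC by simp
qed

lemma vrag_moment_eq: "S > 0 \<Longrightarrow> vrag_moment \<alpha> S = vrag_kernel_sq \<alpha> S / (S * (2/\<alpha>))"
  using vrag_kernel_sq_eq[of S] \<alpha>_pos by (simp add: field_simps)

lemma isCont_vrag_kernel_sq:
  assumes S: "S > 0"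
  shows "isCont (vrag_kernel_sq \<alpha>) S"
proof (rule isCont_if_lipschitz_near[of "S/2"])
  fix h :: real assume h: "\<bar>h\<bar> < S/2"
  have S': "S + h > 0" "S/2 \<le> S + h" using h S by auto
  have B: "vrag_moment_sq \<alpha> S' \<le> vrag_moment \<alpha> (S/2)" if "S/2 \<le> S'" for S'
    using vrag_moment_sq_le[of S'] vrag_moment_antimono[of "S/2" S'] S that by simp
  show "\<bar>vrag_kernel_sq \<alpha> (S+h) - vrag_kernel_sq \<alpha> S\<bar> \<le> \<bar>h\<bar> * vrag_moment \<alpha> (S/2)"
  proof (cases "h \<ge> 0")
    case True
    have "vrag_kernel_sq \<alpha> S - h * vrag_moment_sq \<alpha> S \<le> vrag_kernel_sq \<alpha> (S+h)"
      using vrag_kernel_sq_ge_tangent[OF S, of "S+h"] S' by simp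
    moreover have "vrag_kernel_sq \<alpha> (S+h) \<le> vrag_kernel_sq \<alpha> S"
      using vrag_kernel_sq_antimono[of S "S+h"] S True by simp
    moreover have "h * vrag_moment_sq \<alpha> S \<le> h * vrag_moment \<alpha> (S/2)"
      using B[of S] S True by (intro mult_left_mono) auto
    ultimately have "vrag_kernel_sq \<alpha> S - vrag_kernel_sq \<alpha> (S+h) \<le> h * vrag_moment \<alpha> (S/2)"
      by linarith
    thus ?thesis using \<open>vrag_kernel_sq \<alpha> (S+h) \<le> vrag_kernel_sq \<alpha> S\<close> True by (simp add: abs_if)
  next
    case False
    have "vrag_kernel_sq \<alpha> (S+h) + h * vrag_moment_sq \<alpha> (S+h) \<le> vrag_kernel_sq \<alpha> S"
      using vrag_kernel_sq_ge_tangent[OF S'(1), of S] S by simp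
    moreover have "vrag_kernel_sq \<alpha> S \<le> vrag_kernel_sq \<alpha> (S+h)"
      using vrag_kernel_sq_antimono[of "S+h" S] S' False by simp
    moreover have "(-h) * vrag_moment_sq \<alpha> (S+h) \<le> (-h) * vrag_moment \<alpha> (S/2)"
      using B[of "S+h"] S' False by (intro mult_left_mono) auto
    ultimately have "vrag_kernel_sq \<alpha> (S+h) - vrag_kernel_sq \<alpha> S \<le> (-h) * vrag_moment \<alpha> (S/2)"
      by linarith
    thus ?thesis using \<open>vrag_kernel_sq \<alpha> S \<le> vrag_kernel_sq \<alpha> (S+h)\<close> False by (simp add: abs_if)
  qed
qed (use S in simp)

lemma isCont_vrag_moment:
  assumes S: "S > 0"
  shows "isCont (vrag_moment \<alpha>) S"
proof -
  have cont: "isCont (\<lambda>S. vrag_kernel_sq \<alpha> S / (S * (2/\<alpha>))) S"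
    using isCont_vrag_kernel_sq[OF S] S \<alpha>_pos by (intro continuous_intros) auto
  have ev: "\<forall>\<^sub>F S' in nhds S. vrag_moment \<alpha> S' = vrag_kernel_sq \<alpha> S' / (S' * (2/\<alpha>))"
    using eventually_nhds_in_open[of "{0<..}" S] S vrag_moment_eq by (auto elim!: eventually_mono)
  show ?thesis using isCont_cong[OF ev] cont by simp
qed

text \<open>The tangent bounds at S and at S+h squeeze the difference quotient of A between
  -B(S) and -B(S+h).\<close>

lemma vrag_kernel_has_real_derivative:
  assumes S: "S > 0"
  shows "(vrag_kernel \<alpha> has_real_derivative - vrag_moment \<alpha> S) (at S)"
proof -
  have bound: "\<bar>(vrag_kernel \<alpha> (S+h) - vrag_kernel \<alpha> S)/h - (- vrag_moment \<alpha> S)\<bar>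
      \<le> \<bar>vrag_moment \<alpha> (S+h) - vrag_moment \<alpha> S\<bar>" if h: "h \<noteq> 0" "\<bar>h\<bar> < S" for h
  proof -
    have Sh: "S + h > 0" using h by auto
    define \<Delta> where "\<Delta> = vrag_kernel \<alpha> (S+h) - vrag_kernel \<alpha> S + h * vrag_moment \<alpha> S"
    have "0 \<le> \<Delta>" using vrag_kernel_ge_tangent[OF S Sh] by (simp add: \<Delta>_def)
    moreover have "\<Delta> \<le> h * (vrag_moment \<alpha> S - vrag_moment \<alpha> (S+h))"
      using vrag_kernel_ge_tangent[OF Sh S] by (simp add: \<Delta>_def algebra_simps)
    moreover have "h * (vrag_moment \<alpha> S - vrag_moment \<alpha> (S+h))
        \<le> \<bar>h\<bar> * \<bar>vrag_moment \<alpha> (S+h) - vrag_moment \<alpha> S\<bar>"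
      by (metis abs_ge_self abs_minus_commute abs_mult)
    moreover have "(vrag_kernel \<alpha> (S+h) - vrag_kernel \<alpha> S)/h - (- vrag_moment \<alpha> S) = \<Delta> / h"
      using h unfolding \<Delta>_def by (simp add: field_simps)
    ultimately show ?thesis
      using h by (simp add: abs_divide divide_le_eq mult.commute)
  qed
  have "\<forall>\<^sub>F h in at 0. norm ((vrag_kernel \<alpha> (S+h) - vrag_kernel \<alpha> S)/h - (- vrag_moment \<alpha> S))
       \<le> \<bar>vrag_moment \<alpha> (S+h) - vrag_moment \<alpha> S\<bar>"
    unfolding eventually_at using S bound by (auto simp: dist_real_def intro!: exI[of _ S])
  moreover have "((\<lambda>h. vrag_moment \<alpha> (S+h) - vrag_moment \<alpha> S) \<longlongrightarrow> 0) (at 0)"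
    using isCont_vrag_moment[OF S] unfolding isCont_iff LIM_zero_iff .
  hence "((\<lambda>h. \<bar>vrag_moment \<alpha> (S+h) - vrag_moment \<alpha> S\<bar>) \<longlongrightarrow> 0) (at 0)"
    by (rule tendsto_rabs_zero)
  ultimately have "((\<lambda>h. (vrag_kernel \<alpha> (S+h) - vrag_kernel \<alpha> S)/h - (- vrag_moment \<alpha> S)) \<longlongrightarrow> 0) (at 0)"
    by (rule Lim_null_comparison)
  thus ?thesis unfolding DERIV_def LIM_zero_iff .
qed

lemma isCont_vrag_kernel_comp [continuous_intros]:
  "isCont f x \<Longrightarrow> f x > 0 \<Longrightarrow> isCont (\<lambda>x. vrag_kernel \<alpha> (f x)) x"
  using isCont_o2 DERIV_isCont[OF vrag_kernel_has_real_derivative] by blast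

lemma isCont_vrag_moment_comp [continuous_intros]:
  "isCont f x \<Longrightarrow> f x > 0 \<Longrightarrow> isCont (\<lambda>x. vrag_moment \<alpha> (f x)) x"
  using isCont_o2 isCont_vrag_moment by blast

lemma vrag_comb_integral:
  fixes c :: real
  assumes S: "S > 0"
  defines "f \<equiv> \<lambda>x. exp (- S * x powr (2/\<alpha>))/(1+x) - c * (exp (- S * x powr (2/\<alpha>))/(1+x)^2)"
  shows "set_integrable lborel {0..} f" and "vrag_comb \<alpha> S c = (LBINT x:{0..}. f x)"
proof -
  have "set_integrable lborel {0..} (\<lambda>x. exp (- S * x powr (2/\<alpha>)) / (1+x)^2)"
    using S by (intro set_integrable_vrag_kernel_sq) simp
  note I = set_integral_diff_cmult[OF set_integrable_vrag_kernel[OF S] this, where c=c]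
  show "set_integrable lborel {0..} f" unfolding f_def by (rule I(1))
  show "vrag_comb \<alpha> S c = (LBINT x:{0..}. f x)"
    unfolding f_def vrag_comb_def vrag_kernel_def vrag_kernel_sq_def by (rule I(2)[symmetric])
qed

lemma vrag_comb_antimono: "S \<ge> 0 \<Longrightarrow> c \<le> c' \<Longrightarrow> vrag_comb \<alpha> S c' \<le> vrag_comb \<alpha> S c"
  unfolding vrag_comb_def using vrag_kernel_sq_pos[of S] by (simp add: mult_right_mono)

lemma marginal_payoff_eq_vrag_comb:
  "a + l > 0 \<Longrightarrow> marginal_payoff \<alpha> a l = vrag_comb \<alpha> (a+l) ((\<alpha>/2) * (l/(a+l)))"
  unfolding marginal_payoff_def vrag_comb_def using vrag_moment_eq[of "a+l"] \<alpha>_pos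
  by (simp add: field_simps)

lemma marginal_payoff_diag_eq_vrag_comb:
  "L > 0 \<Longrightarrow> marginal_payoff \<alpha> L L = vrag_comb \<alpha> (L+L) (\<alpha>/4)"
  using marginal_payoff_eq_vrag_comb[of L L] by (simp add: field_simps)

text \<open>The key estimate: with x* = max 0 (c - 1) and E = exp(-h x*^(2/\<alpha>)), the integrand of
  E (A - cC)(S) - (A - cC)(S+h) is nonnegative, and positive beyond x*.\<close>

lemma vrag_comb_shift_less:
  assumes S: "S > 0" and h: "h > 0"
  shows "\<exists>E>0. vrag_comb \<alpha> (S+h) c < E * vrag_comb \<alpha> S c"
proof -
  define xs where "xs = max 0 (c-1)"
  define E where "E = exp (- h * xs powr (2/\<alpha>))"
  have Sh: "S + h > 0" using S h by simp
  let ?e = "\<lambda>S x. exp (- S * x powr (2/\<alpha>))"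
  let ?f = "\<lambda>S x. ?e S x/(1+x) - c * (?e S x/(1+x)^2)"
  have split: "E * ?f S x - ?f (S+h) x
      = ?e S x/(1+x) * ((1 - c/(1+x)) * (exp (- h * xs powr (2/\<alpha>)) - exp (- h * x powr (2/\<alpha>))))"
    if "x \<ge> 0" for x
  proof -
    have "E * (e0/d - c*(e0/d^2)) - (e0*w/d - c*(e0*w/d^2)) = e0/d*((1-c/d)*(E-w))"
      if "d \<noteq> 0" for d e0 w :: real
      using that by (simp add: field_simps power2_eq_square)
    moreover have "?e (S+h) x = ?e S x * exp (- h * x powr (2/\<alpha>))"
      by (simp add: exp_add[symmetric] algebra_simps)
    ultimately show ?thesis using that unfolding E_def by simp
  qed
  have "E * vrag_comb \<alpha> S c - vrag_comb \<alpha> (S+h) c = (LBINT x:{0..}. E * ?f S x - ?f (S+h) x)"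
    unfolding vrag_comb_integral(2)[OF S] vrag_comb_integral(2)[OF Sh]
    by (rule set_integral_cmult_diff(2)[symmetric, OF vrag_comb_integral(1)[OF S] vrag_comb_integral(1)[OF Sh]])
  also have "\<dots> > 0"
  proof (rule set_integral_Ici_pos[OF set_integral_cmult_diff(1)[OF vrag_comb_integral(1)[OF S] vrag_comb_integral(1)[OF Sh]]])
    show "xs \<ge> 0" unfolding xs_def by simp
    fix x :: real
    show "E * ?f S x - ?f (S+h) x \<ge> 0" if x: "x \<ge> 0"
      unfolding split[OF x] xs_def
      using single_crossing_pointwise(1)[OF x h, of "2/\<alpha>" c] x \<alpha>_pos by simp
    show "E * ?f S x - ?f (S+h) x > 0" if xx: "x > xs"
    proof -
      have x: "x \<ge> 0" using xx unfolding xs_def by simp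
      have "?e S x/(1+x) > 0" using x by simp
      moreover have "(1 - c/(1+x)) * (exp (- h * xs powr (2/\<alpha>)) - exp (- h * x powr (2/\<alpha>))) > 0"
        using single_crossing_pointwise(2)[OF x h, of "2/\<alpha>" c] xx \<alpha>_pos unfolding xs_def by simp
      ultimately show ?thesis unfolding split[OF x] by (rule mult_pos_pos)
    qed
  qed
  finally show ?thesis by (intro exI[of _ E]) (auto simp: E_def)
qed

lemma marginal_payoff_single_crossing:
  assumes a: "a \<ge> 0" and l0: "0 < l0" "l0 < l" and D0: "marginal_payoff \<alpha> a l0 \<le> 0"
  shows "marginal_payoff \<alpha> a l < 0"
proof -
  define c where "c = (\<alpha>/2) * (l/(a+l))"
  have S0: "a + l0 > 0" and S: "a + l > 0" using a l0 by auto
  obtain E where E: "E > 0" "vrag_comb \<alpha> ((a+l0) + (l-l0)) c < E * vrag_comb \<alpha> (a+l0) c"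
    using vrag_comb_shift_less[OF S0, of "l - l0" c] l0 by auto
  have "l0/(a+l0) \<le> l/(a+l)" using a l0 S0 S by (simp add: field_simps mult_left_mono)
  hence "(\<alpha>/2) * (l0/(a+l0)) \<le> c" unfolding c_def using \<alpha>_pos by (intro mult_left_mono) auto
  hence "vrag_comb \<alpha> (a+l0) c \<le> marginal_payoff \<alpha> a l0"
    using marginal_payoff_eq_vrag_comb[OF S0] vrag_comb_antimono S0 by simp
  hence "E * vrag_comb \<alpha> (a+l0) c \<le> 0" using D0 E(1) by (simp add: mult_nonneg_nonpos)
  thus ?thesis using E(2) marginal_payoff_eq_vrag_comb[OF S] unfolding c_def by simp
qed

lemma marginal_payoff_diag_single_crossing:
  assumes l0: "0 < l0" "l0 < l" and D0: "marginal_payoff \<alpha> l0 l0 \<le> 0"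
  shows "marginal_payoff \<alpha> l l < 0"
proof -
  obtain E where E: "E > 0" "vrag_comb \<alpha> ((l0+l0) + 2*(l-l0)) (\<alpha>/4) < E * vrag_comb \<alpha> (l0+l0) (\<alpha>/4)"
    using vrag_comb_shift_less[of "l0+l0" "2*(l - l0)" "\<alpha>/4"] l0 by auto
  have "E * vrag_comb \<alpha> (l0+l0) (\<alpha>/4) \<le> 0"
    using marginal_payoff_diag_eq_vrag_comb[of l0] l0 D0 E(1) by (simp add: mult_nonneg_nonpos)
  moreover have "(l0+l0) + 2*(l-l0) = l + l" by simp
  ultimately show ?thesis using E(2) marginal_payoff_diag_eq_vrag_comb[of l] l0 by simp
qed

lemma marginal_payoff_integral:
  assumes "a + l > 0"
  shows "(LBINT x:{0..}. (1 - l * x powr (2/\<alpha>)) / (1+x) * exp (- (a+l) * x powr (2/\<alpha>)))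
    = marginal_payoff \<alpha> a l"
proof -
  have "(LBINT x:{0..}. (1 - l * x powr (2/\<alpha>)) / (1+x) * exp (- (a+l) * x powr (2/\<alpha>)))
     = (LBINT x:{0..}. exp (- (a+l) * x powr (2/\<alpha>)) / (1+x)
          - l * (x powr (2/\<alpha>) * exp (- (a+l) * x powr (2/\<alpha>)) / (1+x)))"
    by (rule set_lebesgue_integral_cong) (auto simp: algebra_simps diff_divide_distrib)
  also have "\<dots> = marginal_payoff \<alpha> a l"
    unfolding marginal_payoff_def vrag_kernel_def vrag_moment_def
    by (rule set_integral_diff_cmult(2)[OF set_integrable_vrag_kernel set_integrable_vrag_moment])
       (use assms in auto)
  finally show ?thesis .
qed

lemma vrag_kernel_ge_log:
  assumes S: "S > 0" and R: "R \<ge> 0"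
  shows "exp (- S * R powr (2/\<alpha>)) * ln (1+R) \<le> vrag_kernel \<alpha> S"
proof -
  have "(LBINT x:{0..R}. exp (- S * R powr (2/\<alpha>)) * (1/(1+x))) \<le> vrag_kernel \<alpha> S"
    unfolding vrag_kernel_def
  proof (rule set_integral_Icc_le_Ici[OF set_integrable_vrag_kernel[OF S] R])
    fix x :: real assume x: "0 \<le> x" "x \<le> R"
    have "x powr (2/\<alpha>) \<le> R powr (2/\<alpha>)" using x \<alpha>_pos by (intro powr_mono2) auto
    thus "exp (- S * R powr (2/\<alpha>)) * (1/(1+x)) \<le> exp (- S * x powr (2/\<alpha>)) / (1+x)"
      using x S by (simp add: divide_right_mono)
  qed (auto intro!: continuous_intros)
  moreover have "(LBINT x:{0..R}. exp (- S * R powr (2/\<alpha>)) * (1/(1+x)))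
      = exp (- S * R powr (2/\<alpha>)) * (LBINT x:{0..R}. 1/(1+x))"
    by (rule set_integral_mult_right)
  ultimately show ?thesis using set_integral_inverse_1_plus[OF R] by simp
qed

lemma vrag_kernel_ge_small:
  assumes S: "S > 0" and t1: "S powr (-\<alpha>/2) \<le> 1"
  shows "S powr (-\<alpha>/2) * (exp (-1) / 2) \<le> vrag_kernel \<alpha> S"
proof -
  let ?t = "S powr (-\<alpha>/2)"
  have "(LBINT x:{0..?t}. exp (-1) / 2) \<le> vrag_kernel \<alpha> S"
    unfolding vrag_kernel_def
  proof (rule set_integral_Icc_le_Ici[OF set_integrable_vrag_kernel[OF S]])
    fix x :: real assume x: "0 \<le> x" "x \<le> ?t"
    have "x powr (2/\<alpha>) \<le> ?t powr (2/\<alpha>)" using x \<alpha>_pos by (intro powr_mono2) auto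
    also have "?t powr (2/\<alpha>) = S powr (-1)" using \<alpha>_pos by (simp add: powr_powr)
    finally have "S * x powr (2/\<alpha>) \<le> 1" using S by (simp add: powr_minus field_simps)
    hence "exp (-1) \<le> exp (- S * x powr (2/\<alpha>))" by simp
    moreover have "1 + x \<le> 2" using x t1 by simp
    ultimately show "exp (-1) / 2 \<le> exp (- S * x powr (2/\<alpha>)) / (1+x)"
      using x by (intro frac_le) auto
  qed auto
  moreover have "(LBINT x:{0..?t}. exp (-1) / 2) = ?t * (exp (-1) / 2)"
    by (subst set_integral_const) auto
  ultimately show ?thesis by simp
qed

lemma mult_exp_divide_le:
  assumes S: "S > 0" and x: "x \<ge> 0"
  defines "M \<equiv> 2 * ((\<alpha>/2) powr (\<alpha>/2) + (3*(\<alpha>/2)) powr (3*(\<alpha>/2)))"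
  shows "x * exp (- S * x powr (2/\<alpha>)) / (1+x) \<le> M * (S powr (-\<alpha>/2))^3 / (S powr (-\<alpha>/2) + x)^2"
proof -
  let ?t = "S powr (-\<alpha>/2)"
  let ?q = "S * x powr (2/\<alpha>)"
  let ?u = "?q powr (\<alpha>/2)"
  have "?u = S powr (\<alpha>/2) * x" using S x powr_exponent_inverse by (simp add: powr_mult)
  hence xu: "x = ?t * ?u" using S by (simp add: powr_add[symmetric])
  have "x * exp (- ?q) * (?t + x)^2 = ?t^3 * (?u * (1 + ?u)^2 * exp (- ?q))"
    by (subst (1 2) xu) (simp add: power2_eq_square power3_eq_cube algebra_simps)
  also have "\<dots> \<le> ?t^3 * M"
    unfolding M_def using powr_mult_square_exp_le[of ?q "\<alpha>/2"] S x \<alpha>_pos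
    by (intro mult_left_mono) auto
  finally have le: "x * exp (- ?q) * (?t + x)^2 \<le> M * ?t^3" by (simp only: ac_simps)
  have "?t + x > 0" using S x by (simp add: add_pos_nonneg)
  hence "x * exp (- ?q) \<le> M * ?t^3 / (?t + x)^2"
    using le by (simp add: pos_le_divide_eq)
  moreover have "x * exp (- ?q) / (1+x) \<le> x * exp (- ?q) / 1"
    using x by (intro divide_left_mono) auto
  ultimately show ?thesis by simp
qed

lemma set_integral_mult_exp_le:
  assumes S: "S > 0"
  defines "M \<equiv> 2 * ((\<alpha>/2) powr (\<alpha>/2) + (3*(\<alpha>/2)) powr (3*(\<alpha>/2)))"
  shows "set_integrable lborel {0..} (\<lambda>x. x * exp (- S * x powr (2/\<alpha>)) / (1+x))"
    and "(LBINT x:{0..}. x * exp (- S * x powr (2/\<alpha>)) / (1+x)) \<le> 2 * M * (S powr (-\<alpha>/2))^2"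
proof -
  let ?t = "S powr (-\<alpha>/2)"
  let ?f = "\<lambda>x. x * exp (- S * x powr (2/\<alpha>)) / (1+x)"
  let ?g = "\<lambda>x. M * ?t^3 * (1/(?t+x)^2)"
  have t: "?t > 0" using S by simp
  have ig: "set_integrable lborel {0..} ?g"
    by (rule set_integrable_mult_right[OF set_integral_inverse_shift_square(1)[OF t]])
  have fg: "?f x \<le> ?g x" if "x \<ge> 0" for x
    using mult_exp_divide_le[OF S that] unfolding M_def by simp
  show I: "set_integrable lborel {0..} ?f"
  proof (rule set_integrable_bound[OF ig])
    show "set_borel_measurable lborel {0..} ?f"
      using set_measurable_continuous_on[of "{0..}" ?f]
      unfolding set_borel_measurable_def by (simp add: continuous_intros continuous_on_powr_exponent)
    show "AE x in lborel. x \<in> {0..} \<longrightarrow> norm (?f x) \<le> norm (?g x)"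
    proof (intro AE_I2 impI)
      fix x :: real assume "x \<in> {0..}"
      hence "norm (?f x) = ?f x" "?f x \<le> ?g x" using fg by simp_all
      moreover have "?g x \<le> norm (?g x)" unfolding real_norm_def by (rule abs_ge_self)
      ultimately show "norm (?f x) \<le> norm (?g x)" by linarith
    qed
  qed
  have "(LBINT x:{0..}. ?f x) \<le> (LBINT x:{0..}. ?g x)"
    by (rule set_integral_mono[OF I ig]) (use fg in auto)
  also have "\<dots> = M * ?t^3 * (LBINT x:{0..}. 1/(?t+x)^2)" by (rule set_integral_mult_right)
  also have "\<dots> \<le> M * ?t^3 * (2/?t)"
    using set_integral_inverse_shift_square(2)[OF t] t \<alpha>_pos unfolding M_def
    by (intro mult_left_mono) auto
  also have "\<dots> = 2 * M * ?t^2"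
    using t by (simp add: power2_eq_square power3_eq_cube field_simps)
  finally show "(LBINT x:{0..}. ?f x) \<le> 2 * M * ?t^2" .
qed

lemma vrag_comb_le_affine:
  fixes c :: real
  assumes c: "c > 1" and S: "S > 0"
  defines "\<eta> \<equiv> (c-1)/(c+1)" and "K \<equiv> (1 + (c-1)/(c+1)) / ((c-1)/2)"
  shows "vrag_comb \<alpha> S c
    \<le> K * (LBINT x:{0..}. x * exp (- S * x powr (2/\<alpha>)) / (1+x)) - \<eta> * vrag_kernel \<alpha> S"
proof -
  let ?e = "\<lambda>x. exp (- S * x powr (2/\<alpha>))"
  note iJ = set_integral_mult_exp_le(1)[OF S]
  have iA: "set_integrable lborel {0..} (\<lambda>x. \<eta> * (?e x / (1+x)))"
    by (rule set_integrable_mult_right[OF set_integrable_vrag_kernel[OF S]])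
  have "vrag_comb \<alpha> S c = (LBINT x:{0..}. ?e x/(1+x) - c * (?e x/(1+x)^2))"
    by (rule vrag_comb_integral(2)[OF S])
  also have "\<dots> \<le> (LBINT x:{0..}. K * (x * ?e x / (1+x)) - \<eta> * (?e x / (1+x)))"
  proof (rule set_integral_mono[OF vrag_comb_integral(1)[OF S] set_integral_cmult_diff(1)[OF iJ iA]])
    fix x :: real assume "x \<in> {0..}"
    hence x: "x \<ge> 0" by simp
    have "?e x/(1+x) - c * (?e x/(1+x)^2) = (1 - c/(1+x)) * (?e x/(1+x))"
      using x by (intro diff_cmult_divide_square) simp
    also have "\<dots> \<le> (- \<eta> + K * x) * (?e x/(1+x))"
      using one_minus_divide_le_affine[OF c x] x unfolding \<eta>_def K_def by (intro mult_right_mono) auto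
    also have "\<dots> = K * (x * ?e x / (1+x)) - \<eta> * (?e x / (1+x))"
      by (simp add: divide_inverse algebra_simps)
    finally show "?e x/(1+x) - c * (?e x/(1+x)^2) \<le> K * (x * ?e x / (1+x)) - \<eta> * (?e x / (1+x))" .
  qed
  also have "\<dots> = K * (LBINT x:{0..}. x * ?e x / (1+x)) - \<eta> * vrag_kernel \<alpha> S"
    unfolding set_integral_cmult_diff(2)[OF iJ iA] vrag_kernel_def set_integral_mult_right ..
  finally show ?thesis .
qed

text \<open>For c > 1 the negative part of 1 - c/(1+x) near x = 0 carries the integral: bounding
  1 - c/(1+x) \<le> -\<eta> + K x, the term -\<eta> A(S) is of order S^(-\<alpha>/2), while
  K \<integral> x exp(-S x^(2/\<alpha>))/(1+x) dx is of order S^(-\<alpha>).\<close>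

lemma vrag_comb_eventually_neg:
  assumes c: "c > 1"
  shows "\<exists>S1>0. \<forall>S\<ge>S1. vrag_comb \<alpha> S c < 0"
proof -
  define \<eta> where "\<eta> = (c-1)/(c+1)"
  define K where "K = (1 + (c-1)/(c+1)) / ((c-1)/2)"
  define C4 where "C4 = 4 * ((\<alpha>/2) powr (\<alpha>/2) + (3 * (\<alpha>/2)) powr (3 * (\<alpha>/2)))"
  have \<eta>: "\<eta> > 0" unfolding \<eta>_def using c by simp
  have K: "K > 0" unfolding K_def using c by (simp add: add_pos_pos)
  have C4: "C4 > 0" unfolding C4_def using \<alpha>_pos by (simp add: add_pos_nonneg)
  define \<tau> where "\<tau> = \<eta> * (exp (-1) / 2) / (K * C4)"
  have \<tau>: "\<tau> > 0" unfolding \<tau>_def using \<eta> K C4 by simp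
  define m where "m = min 1 (\<tau>/2)"
  have m: "m > 0" "m \<le> 1" "m < \<tau>" unfolding m_def using \<tau> by auto
  define S1 where "S1 = m powr (-2/\<alpha>)"
  have S1: "S1 > 0" "S1 powr (-\<alpha>/2) = m" unfolding S1_def using m \<alpha>_pos by (simp_all add: powr_powr)
  have "vrag_comb \<alpha> S c < 0" if SS: "S \<ge> S1" for S
  proof -
    have S: "S > 0" using SS S1 by simp
    let ?t = "S powr (-\<alpha>/2)"
    have tm: "?t \<le> m" unfolding S1(2)[symmetric] using SS S1 \<alpha>_pos by (intro powr_mono2') auto
    have t0: "?t > 0" using S by simp
    have "vrag_comb \<alpha> S c
        \<le> K * (LBINT x:{0..}. x * exp (- S * x powr (2/\<alpha>)) / (1+x)) - \<eta> * vrag_kernel \<alpha> S"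
      using vrag_comb_le_affine[OF c S] unfolding \<eta>_def K_def .
    also have "\<dots> \<le> K * (C4 * ?t^2) - \<eta> * (?t * (exp (-1) / 2))"
      using set_integral_mult_exp_le(2)[OF S] vrag_kernel_ge_small[OF S] tm m K \<eta> unfolding C4_def
      by (intro diff_mono mult_left_mono) auto
    also have "\<dots> < 0"
    proof -
      have "K * C4 * ?t < K * C4 * \<tau>" using tm m K C4 by (intro mult_strict_left_mono) auto
      also have "K * C4 * \<tau> = \<eta> * (exp (-1) / 2)" unfolding \<tau>_def using K C4 by simp
      finally have "K * C4 * ?t * ?t < \<eta> * (exp (-1) / 2) * ?t" using t0 by (intro mult_strict_right_mono)
      thus ?thesis by (simp add: power2_eq_square algebra_simps)
    qed
    finally show ?thesis .
  qed
  thus ?thesis using S1 by blast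
qed

lemma isCont_marginal_payoff: "a + l > 0 \<Longrightarrow> isCont (marginal_payoff \<alpha> a) l"
  unfolding marginal_payoff_def by (intro continuous_intros) auto

lemma isCont_marginal_payoff_diag: "L > 0 \<Longrightarrow> isCont (\<lambda>L. marginal_payoff \<alpha> L L) L"
  unfolding marginal_payoff_def by (intro continuous_intros) auto

lemma marginal_payoff_at_0: "a > 0 \<Longrightarrow> marginal_payoff \<alpha> a 0 > 0"
  unfolding marginal_payoff_def using vrag_kernel_pos by simp

lemma payoff_has_real_derivative:
  assumes "a + m > 0"
  shows "((\<lambda>m. m * vrag_kernel \<alpha> (a + m)) has_real_derivative marginal_payoff \<alpha> a m) (at m)"
proof -
  have "((\<lambda>m. a + m) has_real_derivative 1) (at m)"
    by (auto intro!: derivative_eq_intros)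
  from DERIV_chain2[OF vrag_kernel_has_real_derivative[OF assms] this]
  have "((\<lambda>m. vrag_kernel \<alpha> (a + m)) has_real_derivative - vrag_moment \<alpha> (a + m)) (at m)"
    by simp
  from DERIV_mult[OF DERIV_ident this] show ?thesis
    unfolding marginal_payoff_def by (simp add: algebra_simps)
qed

lemma exists_marginal_payoff_pos:
  assumes a: "a > 0"
  shows "\<exists>l>0. marginal_payoff \<alpha> a l > 0"
proof -
  define l where "l = min 1 (vrag_kernel \<alpha> (a+1) / (2 * vrag_moment \<alpha> a))"
  have A: "vrag_kernel \<alpha> (a+1) > 0" and B: "vrag_moment \<alpha> a > 0"
    using vrag_kernel_pos vrag_moment_pos a by simp_all
  have l: "l > 0" "l \<le> 1" "l \<le> vrag_kernel \<alpha> (a+1) / (2 * vrag_moment \<alpha> a)"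
    unfolding l_def using A B by auto
  have lB: "l * vrag_moment \<alpha> a \<le> vrag_kernel \<alpha> (a+1) / 2"
    using l(3) B by (simp add: field_simps)
  have "vrag_kernel \<alpha> (a+1) \<le> vrag_kernel \<alpha> (a+l)"
    using vrag_kernel_antimono[of "a+l" "a+1"] a l by simp
  moreover have "l * vrag_moment \<alpha> (a+l) \<le> l * vrag_moment \<alpha> a"
    using vrag_moment_antimono[of a "a+l"] a l by (intro mult_left_mono) auto
  ultimately have "marginal_payoff \<alpha> a l \<ge> vrag_kernel \<alpha> (a+1) / 2"
    unfolding marginal_payoff_def using lB by linarith
  thus ?thesis using l A by (intro exI[of _ l]) auto
qed

lemma marginal_payoff_diag_pos:
  assumes "\<alpha> \<le> 4" and L: "L > 0"
  shows "marginal_payoff \<alpha> L L > 0"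
proof -
  have LL: "L + L > 0" using L by simp
  let ?e = "\<lambda>x. exp (- (L+L) * x powr (2/\<alpha>))/(1+x)"
  let ?f = "\<lambda>x. ?e x - (\<alpha>/4) * (exp (- (L+L) * x powr (2/\<alpha>))/(1+x)^2)"
  have f: "?f x = (1 - (\<alpha>/4)/(1+x)) * ?e x" if "x \<ge> 0" for x
    using that by (intro diff_cmult_divide_square) simp
  have c: "(\<alpha>/4)/(1+x) \<le> 1/(1+x)" if "x \<ge> 0" for x
    using assms that by (intro divide_right_mono) auto
  have "0 < (LBINT x:{0..}. ?f x)"
  proof (rule set_integral_Ici_pos[OF vrag_comb_integral(1)[OF LL], where c=0])
    fix x :: real
    show "0 \<le> ?f x" if x: "x \<ge> 0"
    proof -
      have "1/(1+x) \<le> 1" using x by simp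
      hence "0 \<le> 1 - (\<alpha>/4)/(1+x)" using c[OF x] by linarith
      thus ?thesis unfolding f[OF x] using x by simp
    qed
    show "0 < ?f x" if x: "x > 0"
    proof -
      have "1/(1+x) < 1" using x by simp
      hence "0 < 1 - (\<alpha>/4)/(1+x)" using c[of x] x by linarith
      thus ?thesis unfolding f[OF less_imp_le[OF x]] using x by simp
    qed
  qed simp
  thus ?thesis
    using marginal_payoff_diag_eq_vrag_comb[OF L] vrag_comb_integral(2)[OF LL] by simp
qed

text \<open>A(S) \<ge> e^(-S R^(2/\<alpha>)) ln(1+R) grows without bound as S \<rightarrow> 0 (take R = e^(2(Q+1)) - 1),
  while (\<alpha>/4) C(S) stays below Q = (\<alpha>/4) C(0).\<close>

lemma exists_marginal_payoff_diag_pos: "\<exists>L>0. marginal_payoff \<alpha> L L > 0"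
proof -
  define Q where "Q = (\<alpha>/4) * vrag_kernel_sq \<alpha> 0"
  have Q: "Q \<ge> 0" unfolding Q_def using vrag_kernel_sq_pos[of 0] \<alpha>_pos by simp
  define R where "R = exp (2 * (Q + 1)) - 1"
  have R: "R \<ge> 0" "ln (1 + R) = 2 * (Q + 1)" unfolding R_def using Q by simp_all
  define L where "L = ln 2 / (2 * (R powr (2/\<alpha>) + 1))"
  have L: "L > 0" unfolding L_def by (simp add: add_nonneg_pos)
  have "2 * (q / (2 * (r + 1))) * r = q * (r / (r + 1))" if "r \<ge> 0" for q r :: real
    using that by (simp add: field_simps)
  hence "2 * L * R powr (2/\<alpha>) = ln 2 * (R powr (2/\<alpha>) / (R powr (2/\<alpha>) + 1))"
    unfolding L_def by simp
  also have "\<dots> \<le> ln 2 * 1" by (intro mult_left_mono) (auto simp: divide_le_eq_1 add_nonneg_pos)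
  finally have "2 * L * R powr (2/\<alpha>) \<le> ln 2" by simp
  hence "exp (- ln 2) \<le> exp (- (L+L) * R powr (2/\<alpha>))" by simp
  hence "(1/2) * ln (1+R) \<le> exp (- (L+L) * R powr (2/\<alpha>)) * ln (1+R)"
    using R Q by (intro mult_right_mono) (auto simp: exp_minus)
  also have "\<dots> \<le> vrag_kernel \<alpha> (L+L)"
    using L R by (intro vrag_kernel_ge_log) auto
  finally have "Q + 1 \<le> vrag_kernel \<alpha> (L+L)" using R by simp
  moreover have "(\<alpha>/4) * vrag_kernel_sq \<alpha> (L+L) \<le> Q"
    unfolding Q_def using vrag_kernel_sq_antimono[of 0 "L+L"] L \<alpha>_pos by (simp add: mult_left_mono)
  ultimately show ?thesis
    using marginal_payoff_diag_eq_vrag_comb[OF L] L unfolding vrag_comb_def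
    by (intro exI[of _ L]) auto
qed

lemma exists_marginal_payoff_diag_neg:
  assumes "\<alpha> > 4"
  shows "\<exists>L>0. marginal_payoff \<alpha> L L < 0"
proof -
  obtain S1 where S1: "S1 > 0" "\<forall>S\<ge>S1. vrag_comb \<alpha> S (\<alpha>/4) < 0"
    using vrag_comb_eventually_neg[of "\<alpha>/4"] assms by auto
  thus ?thesis using marginal_payoff_diag_eq_vrag_comb[of S1] by (intro exI[of _ S1]) auto
qed

lemma Lambda_pp_eq:
  assumes "\<alpha> > 4"
  shows "\<exists>L>0. Lambda_pp \<alpha> = ereal L \<and> marginal_payoff \<alpha> L L = 0"
proof -
  obtain p where p: "p > 0" "marginal_payoff \<alpha> p p > 0"
    using exists_marginal_payoff_diag_pos by blast
  obtain n where n: "n > 0" "marginal_payoff \<alpha> n n < 0"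
    using exists_marginal_payoff_diag_neg[OF assms] by blast
  have root: "\<exists>!L. L > 0 \<and> marginal_payoff \<alpha> L L = 0"
    by (rule unique_root_if_single_crossing[where f="\<lambda>L. marginal_payoff \<alpha> L L",
          OF isCont_marginal_payoff_diag marginal_payoff_diag_single_crossing p n])
  have "(L > 0 \<and> (LBINT x:{0..}. (1 - L * x powr (2/\<alpha>)) / (1+x) * exp (- 2 * L * x powr (2/\<alpha>))) = 0)
      \<longleftrightarrow> (L > 0 \<and> marginal_payoff \<alpha> L L = 0)" for L
  proof -
    have "- 2 * L * x powr (2/\<alpha>) = - (L + L) * x powr (2/\<alpha>)" for x :: real by simp
    thus ?thesis using marginal_payoff_integral[of L L] by auto
  qed
  hence "Lambda_pp \<alpha> = ereal (THE L. L > 0 \<and> marginal_payoff \<alpha> L L = 0)"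
    unfolding Lambda_pp_def using assms by simp
  thus ?thesis using theI'[OF root] by blast
qed

lemma marginal_payoff_diag_nonneg_iff:
  assumes N: "N > 0"
  shows "0 \<le> marginal_payoff \<alpha> N N \<longleftrightarrow> ereal N \<le> Lambda_pp \<alpha>"
proof (cases "\<alpha> > 4")
  case True
  then obtain L where L: "L > 0" "Lambda_pp \<alpha> = ereal L" "marginal_payoff \<alpha> L L = 0"
    using Lambda_pp_eq by blast
  consider "N < L" | "N = L" | "L < N" by linarith
  thus ?thesis
  proof cases
    case 1
    have "0 \<le> marginal_payoff \<alpha> N N"
    proof (rule ccontr)
      assume "\<not> 0 \<le> marginal_payoff \<alpha> N N"
      hence "marginal_payoff \<alpha> L L < 0" using marginal_payoff_diag_single_crossing[OF N 1] by simp
      thus False using L(3) by simp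
    qed
    thus ?thesis using 1 L(2) by simp
  next
    case 3
    have "marginal_payoff \<alpha> N N < 0" using marginal_payoff_diag_single_crossing[OF L(1) 3] L(3) by simp
    thus ?thesis using 3 L(2) by simp
  qed (use L in simp)
next
  case False
  thus ?thesis using marginal_payoff_diag_pos[OF _ N] by (simp add: Lambda_pp_def)
qed

end

subsection \<open>Best replies and equilibria\<close>

text \<open>\<alpha> > 2 is needed only to make D(a,.) eventually negative: c = (\<alpha>/2) l/(a+l) must
  exceed 1 for large l.\<close>

context
  fixes \<alpha> :: real
  assumes \<alpha>_gt_2: "\<alpha> > 2"
begin

interpretation path_loss_exponent \<alpha>
  using \<alpha>_gt_2 by unfold_locales simp

lemma exists_marginal_payoff_neg:
  assumes a: "a \<ge> 0"
  shows "\<exists>l>0. marginal_payoff \<alpha> a l < 0"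
proof -
  define c where "c = (1 + \<alpha>/2)/2"
  have c: "c > 1" "c < \<alpha>/2" unfolding c_def using \<alpha>_gt_2 by auto
  obtain S1 where S1: "S1 > 0" "\<forall>S\<ge>S1. vrag_comb \<alpha> S c < 0"
    using vrag_comb_eventually_neg[OF c(1)] by auto
  define l where "l = max S1 (c * a / (\<alpha>/2 - c)) + 1"
  have l: "l > 0" "l \<ge> S1" "l \<ge> c * a / (\<alpha>/2 - c)" unfolding l_def using S1 by auto
  have al: "a + l > 0" using a l by simp
  have "c * a \<le> l * (\<alpha>/2 - c)" using l(3) c by (simp add: field_simps)
  hence "c \<le> (\<alpha>/2) * (l/(a+l))" using al by (simp add: field_simps)
  hence "marginal_payoff \<alpha> a l \<le> vrag_comb \<alpha> (a+l) c"
    using marginal_payoff_eq_vrag_comb[OF al] vrag_comb_antimono al by simp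
  also have "\<dots> < 0" using S1 l a by auto
  finally show ?thesis using l by auto
qed

lemma Lambda_hat_root:
  assumes a: "a > 0"
  shows "Lambda_hat \<alpha> a > 0" and "marginal_payoff \<alpha> a (Lambda_hat \<alpha> a) = 0"
proof -
  obtain p where p: "p > 0" "marginal_payoff \<alpha> a p > 0"
    using exists_marginal_payoff_pos[OF a] by blast
  obtain n where n: "n > 0" "marginal_payoff \<alpha> a n < 0"
    using exists_marginal_payoff_neg[of a] a by auto
  have root: "\<exists>!l. l > 0 \<and> marginal_payoff \<alpha> a l = 0"
    using a by (intro unique_root_if_single_crossing[OF _ _ p n])
      (auto intro: isCont_marginal_payoff marginal_payoff_single_crossing)
  have "(l > 0 \<and> (LBINT x:{0..}. (1 - l * x powr (2/\<alpha>)) / (1+x) * exp (- (a + l) * x powr (2/\<alpha>))) = 0)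
      \<longleftrightarrow> (l > 0 \<and> marginal_payoff \<alpha> a l = 0)" for l
    using marginal_payoff_integral[of a l] a by auto
  hence "Lambda_hat \<alpha> a = (THE l. l > 0 \<and> marginal_payoff \<alpha> a l = 0)"
    unfolding Lambda_hat_def by simp
  thus "Lambda_hat \<alpha> a > 0" "marginal_payoff \<alpha> a (Lambda_hat \<alpha> a) = 0"
    using theI'[OF root] by simp_all
qed

lemma marginal_payoff_sign:
  assumes a: "a > 0" and l: "l \<ge> 0"
  shows "0 < marginal_payoff \<alpha> a l \<longleftrightarrow> l < Lambda_hat \<alpha> a"
    and "marginal_payoff \<alpha> a l < 0 \<longleftrightarrow> Lambda_hat \<alpha> a < l"
proof -
  let ?r = "Lambda_hat \<alpha> a"
  note r = Lambda_hat_root[OF a]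
  have "0 < marginal_payoff \<alpha> a l" if "l < ?r"
  proof (rule ccontr)
    assume "\<not> 0 < marginal_payoff \<alpha> a l"
    moreover have "l > 0" using marginal_payoff_at_0[OF a] \<open>\<not> _\<close> l by (cases "l = 0") auto
    ultimately have "marginal_payoff \<alpha> a ?r < 0"
      using marginal_payoff_single_crossing[of a l ?r] a that by simp
    thus False using r by simp
  qed
  moreover have "marginal_payoff \<alpha> a l < 0" if "?r < l"
    using marginal_payoff_single_crossing[of a ?r l] a r that by simp
  moreover consider "l < ?r" | "l = ?r" | "?r < l" by linarith
  ultimately show "0 < marginal_payoff \<alpha> a l \<longleftrightarrow> l < ?r" "marginal_payoff \<alpha> a l < 0 \<longleftrightarrow> ?r < l"
    using r by (metis less_asym)+
qed

lemma Lambda_hat_eqI: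
  "a > 0 \<Longrightarrow> l \<ge> 0 \<Longrightarrow> marginal_payoff \<alpha> a l = 0 \<Longrightarrow> Lambda_hat \<alpha> a = l"
  using marginal_payoff_sign[of a l] by (cases l "Lambda_hat \<alpha> a" rule: linorder_cases) auto

lemma payoff_less_payoff:
  assumes a: "a > 0" and m: "0 \<le> m" "m < l"
  shows "l \<le> Lambda_hat \<alpha> a \<Longrightarrow> m * vrag_kernel \<alpha> (a + m) < l * vrag_kernel \<alpha> (a + l)"
    and "Lambda_hat \<alpha> a \<le> m \<Longrightarrow> l * vrag_kernel \<alpha> (a + l) < m * vrag_kernel \<alpha> (a + m)"
proof -
  let ?u = "\<lambda>m. m * vrag_kernel \<alpha> (a + m)"
  have deriv: "(?u has_real_derivative marginal_payoff \<alpha> a x) (at x)" if "x \<ge> 0" for x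
    using payoff_has_real_derivative[of a x] a that by simp
  have "isCont ?u x" if "x \<ge> 0" for x
    using DERIV_isCont[OF deriv[OF that]] .
  hence cont: "continuous_on {m..l} ?u"
    using m by (intro continuous_at_imp_continuous_on) auto
  show "?u m < ?u l" if r: "l \<le> Lambda_hat \<alpha> a"
  proof (rule DERIV_pos_imp_increasing_open[OF m(2) _ cont])
    fix x assume x: "m < x" "x < l"
    hence "0 < marginal_payoff \<alpha> a x" using marginal_payoff_sign(1)[OF a, of x] m r by simp
    thus "\<exists>y. (?u has_real_derivative y) (at x) \<and> y > 0" using deriv[of x] x m by auto
  qed
  show "?u l < ?u m" if r: "Lambda_hat \<alpha> a \<le> m"
  proof (rule DERIV_neg_imp_decreasing_open[OF m(2) _ cont])
    fix x assume x: "m < x" "x < l"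
    hence "marginal_payoff \<alpha> a x < 0" using marginal_payoff_sign(2)[OF a, of x] m r by simp
    thus "\<exists>y. (?u has_real_derivative y) (at x) \<and> y < 0" using deriv[of x] x m by auto
  qed
qed

lemma best_reply_iff:
  assumes a: "a > 0" and l: "0 \<le> l" "l \<le> N"
  shows "(\<forall>m\<in>{0..N}. m * vrag_kernel \<alpha> (a + m) \<le> l * vrag_kernel \<alpha> (a + l))
    \<longleftrightarrow> l = min N (Lambda_hat \<alpha> a)"
proof -
  let ?u = "\<lambda>m. m * vrag_kernel \<alpha> (a + m)"
  let ?b = "min N (Lambda_hat \<alpha> a)"
  have b: "0 \<le> ?b" "?b \<le> N" using Lambda_hat_root(1)[OF a] l by auto
  have better: "?u m < ?u ?b" if m: "0 \<le> m" "m \<le> N" "m \<noteq> ?b" for m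
  proof (cases "m < ?b")
    case True
    thus ?thesis using payoff_less_payoff(1)[OF a m(1) True] by simp
  next
    case False
    hence "?b < m" using m(3) by linarith
    moreover from this have "?b = Lambda_hat \<alpha> a" using m(2) by (auto simp: min_def)
    ultimately show ?thesis using payoff_less_payoff(2)[OF a b(1)] by simp
  qed
  show ?thesis
  proof
    assume max: "\<forall>m\<in>{0..N}. ?u m \<le> ?u l"
    show "l = ?b"
    proof (rule ccontr)
      assume "l \<noteq> ?b"
      hence "?u l < ?u ?b" using better l by simp
      moreover have "?u ?b \<le> ?u l" using max b by simp
      ultimately show False by simp
    qed
  next
    assume "l = ?b"
    show "\<forall>m\<in>{0..N}. ?u m \<le> ?u l"
    proof
      fix m assume "m \<in> {0..N}"
      thus "?u m \<le> ?u l" using better[of m] \<open>l = ?b\<close> by (cases "m = ?b") auto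
    qed
  qed
qed

lemma is_nash_iff:
  assumes N1: "N1 > 0" and N2: "N2 > 0"
  shows "is_nash \<alpha> N1 N2 l1 l2 \<longleftrightarrow>
    0 < l1 \<and> 0 < l2 \<and> l1 = min N1 (Lambda_hat \<alpha> l2) \<and> l2 = min N2 (Lambda_hat \<alpha> l1)"
proof -
  have U1: "U1 \<alpha> m l2 = m * vrag_kernel \<alpha> (l2 + m)" for m unfolding U1_def by (simp add: add.commute)
  have U2: "U2 \<alpha> l1 m = m * vrag_kernel \<alpha> (l1 + m)" for m unfolding U2_def by simp
  have nash: "is_nash \<alpha> N1 N2 l1 l2 \<longleftrightarrow> 0 \<le> l1 \<and> l1 \<le> N1 \<and> 0 \<le> l2 \<and> l2 \<le> N2 \<and>
      (\<forall>m\<in>{0..N1}. m * vrag_kernel \<alpha> (l2 + m) \<le> l1 * vrag_kernel \<alpha> (l2 + l1)) \<and>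
      (\<forall>m\<in>{0..N2}. m * vrag_kernel \<alpha> (l1 + m) \<le> l2 * vrag_kernel \<alpha> (l1 + l2))"
    unfolding is_nash_def U1 U2 by auto
  show ?thesis
  proof
    assume "is_nash \<alpha> N1 N2 l1 l2"
    hence range: "0 \<le> l1" "l1 \<le> N1" "0 \<le> l2" "l2 \<le> N2"
      and max1: "\<forall>m\<in>{0..N1}. m * vrag_kernel \<alpha> (l2 + m) \<le> l1 * vrag_kernel \<alpha> (l2 + l1)"
      and max2: "\<forall>m\<in>{0..N2}. m * vrag_kernel \<alpha> (l1 + m) \<le> l2 * vrag_kernel \<alpha> (l1 + l2)"
      unfolding nash by blast+
    have reply1: "l1 = min N1 (Lambda_hat \<alpha> l2)" if "l2 > 0"
      using best_reply_iff[OF that range(1,2)] max1 by blast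
    have reply2: "l2 = min N2 (Lambda_hat \<alpha> l1)" if "l1 > 0"
      using best_reply_iff[OF that range(3,4)] max2 by blast
    have pos: "0 < min N l" if "N > 0" "l > 0" for N l :: real using that by simp
    have "l2 > 0"
    proof (rule ccontr)
      assume "\<not> l2 > 0"
      hence l2: "l2 = 0" using range by simp
      have "0 < N1 * vrag_kernel \<alpha> N1" using N1 vrag_kernel_pos by simp
      also have "\<dots> \<le> l1 * vrag_kernel \<alpha> l1" using max1 N1 l2 by simp
      finally have "l1 > 0" using range by (cases "l1 = 0") auto
      hence "l2 > 0" using reply2 pos[OF N2 Lambda_hat_root(1)] by metis
      thus False using l2 by simp
    qed
    moreover have "l1 > 0" using reply1[OF \<open>l2 > 0\<close>] pos[OF N1 Lambda_hat_root(1)[OF \<open>l2 > 0\<close>]] by simp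
    ultimately show "0 < l1 \<and> 0 < l2 \<and> l1 = min N1 (Lambda_hat \<alpha> l2) \<and> l2 = min N2 (Lambda_hat \<alpha> l1)"
      using reply1 reply2 by blast
  next
    assume H: "0 < l1 \<and> 0 < l2 \<and> l1 = min N1 (Lambda_hat \<alpha> l2) \<and> l2 = min N2 (Lambda_hat \<alpha> l1)"
    hence range: "0 \<le> l1" "l1 \<le> N1" "0 \<le> l2" "l2 \<le> N2" by linarith+
    have "\<forall>m\<in>{0..N1}. m * vrag_kernel \<alpha> (l2 + m) \<le> l1 * vrag_kernel \<alpha> (l2 + l1)"
      using best_reply_iff[of l2 l1 N1] H range by blast
    moreover have "\<forall>m\<in>{0..N2}. m * vrag_kernel \<alpha> (l1 + m) \<le> l2 * vrag_kernel \<alpha> (l1 + l2)"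
      using best_reply_iff[of l1 l2 N2] H range by blast
    ultimately show "is_nash \<alpha> N1 N2 l1 l2" unfolding nash using range by blast
  qed
qed

lemma marginal_payoff_swap_less:
  assumes "0 < l1" "l1 < l2"
  shows "marginal_payoff \<alpha> l1 l2 < marginal_payoff \<alpha> l2 l1"
proof -
  have "0 < (l2 - l1) * vrag_moment \<alpha> (l1 + l2)" using assms vrag_moment_pos[of "l1 + l2"] by simp
  thus ?thesis using marginal_payoff_swap[of \<alpha> l2 l1] by linarith
qed

text \<open>Player 2 cannot be at the full rate N2 \<ge> N1 > l1: the swap inequality would make his
  marginal payoff negative.\<close>

lemma nash_partial_imp_symmetric:
  assumes N1: "0 < N1" and N12: "N1 \<le> N2" and ne: "is_nash \<alpha> N1 N2 l1 l2" and l1: "l1 < N1"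
  shows "l1 = l2" and "marginal_payoff \<alpha> l1 l1 = 0"
proof -
  have N2: "0 < N2" using N1 N12 by simp
  have H: "0 < l1" "0 < l2" "l1 = min N1 (Lambda_hat \<alpha> l2)" "l2 = min N2 (Lambda_hat \<alpha> l1)"
    using ne is_nash_iff[OF N1 N2] by blast+
  have "l1 = Lambda_hat \<alpha> l2" using H(3) l1 by (simp add: min_def split: if_splits)
  hence D21: "marginal_payoff \<alpha> l2 l1 = 0" using Lambda_hat_root(2)[OF H(2)] by simp
  have "l2 < N2"
  proof (rule ccontr)
    assume "\<not> l2 < N2"
    hence l2: "l2 = N2" "l2 \<le> Lambda_hat \<alpha> l1" using H(4) by (simp_all add: min_def split: if_splits)
    hence "0 \<le> marginal_payoff \<alpha> l1 l2" using marginal_payoff_sign(2)[OF H(1), of l2] H(2) by simp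
    moreover have "marginal_payoff \<alpha> l1 l2 < marginal_payoff \<alpha> l2 l1"
      using marginal_payoff_swap_less[OF H(1)] l1 N12 l2(1) by simp
    ultimately show False using D21 by simp
  qed
  hence "l2 = Lambda_hat \<alpha> l1" using H(4) by (simp add: min_def split: if_splits)
  hence D12: "marginal_payoff \<alpha> l1 l2 = 0" using Lambda_hat_root(2)[OF H(1)] by simp
  show "l1 = l2"
    using marginal_payoff_swap_less[of l1 l2] marginal_payoff_swap_less[of l2 l1] H(1,2) D12 D21
    by (cases l1 l2 rule: linorder_cases) auto
  thus "marginal_payoff \<alpha> l1 l1 = 0" using D12 by simp
qed

lemma nash_iff_full_reuse:
  assumes N1: "0 < N1" and N12: "N1 \<le> N2" and D: "0 \<le> marginal_payoff \<alpha> N1 N1"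
  shows "is_nash \<alpha> N1 N2 l1 l2 \<longleftrightarrow> l1 = N1 \<and> l2 = min N2 (Lambda_hat \<alpha> N1)"
proof
  have N2: "0 < N2" using N1 N12 by simp
  assume ne: "is_nash \<alpha> N1 N2 l1 l2"
  hence H: "0 < l1" "l1 = min N1 (Lambda_hat \<alpha> l2)" "l2 = min N2 (Lambda_hat \<alpha> l1)"
    using is_nash_iff[OF N1 N2] by blast+
  have "l1 = N1"
  proof (rule ccontr)
    assume "l1 \<noteq> N1"
    hence "l1 < N1" using H(2) by simp
    hence "marginal_payoff \<alpha> N1 N1 < 0"
      using marginal_payoff_diag_single_crossing[OF H(1)] nash_partial_imp_symmetric(2)[OF N1 N12 ne] by simp
    thus False using D by simp
  qed
  thus "l1 = N1 \<and> l2 = min N2 (Lambda_hat \<alpha> N1)" using H(3) by simp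
next
  assume l: "l1 = N1 \<and> l2 = min N2 (Lambda_hat \<alpha> N1)"
  have "N1 \<le> Lambda_hat \<alpha> N1" using marginal_payoff_sign(2)[OF N1, of N1] N1 D by simp
  hence l2: "N1 \<le> l2" "l2 \<le> Lambda_hat \<alpha> N1" using l N12 by simp_all
  have "0 \<le> marginal_payoff \<alpha> N1 l2" using marginal_payoff_sign(2)[OF N1, of l2] l2 N1 by simp
  also have "\<dots> \<le> marginal_payoff \<alpha> l2 N1"
    using marginal_payoff_swap_less[OF N1, of l2] l2(1) by (cases "N1 = l2") auto
  finally have "N1 \<le> Lambda_hat \<alpha> l2"
    using marginal_payoff_sign(2)[of l2 N1] l2(1) N1 by simp
  thus "is_nash \<alpha> N1 N2 l1 l2"
    using is_nash_iff[OF N1] l l2(1) N1 N12 by simp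
qed

lemma nash_iff_partial_reuse:
  assumes L: "0 < L" "L < N1" and N12: "N1 \<le> N2" and D: "marginal_payoff \<alpha> L L = 0"
  shows "is_nash \<alpha> N1 N2 l1 l2 \<longleftrightarrow> l1 = L \<and> l2 = L"
proof
  have N1: "0 < N1" and N2: "0 < N2" using L N12 by simp_all
  assume ne: "is_nash \<alpha> N1 N2 l1 l2"
  hence H: "0 < l1" "0 < l2" "l1 = min N1 (Lambda_hat \<alpha> l2)" "l2 = min N2 (Lambda_hat \<alpha> l1)"
    using is_nash_iff[OF N1 N2] by blast+
  have "l1 < N1"
  proof (rule ccontr)
    assume "\<not> l1 < N1"
    hence l1: "l1 = N1" using H(3) by simp
    have "marginal_payoff \<alpha> N1 N1 < 0"
      using marginal_payoff_diag_single_crossing[OF L(1,2)] D by simp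
    hence "Lambda_hat \<alpha> N1 < N1" using marginal_payoff_sign(2)[OF N1, of N1] N1 by simp
    hence l2: "l2 = Lambda_hat \<alpha> N1" "l2 < N1" using H(4) l1 N12 by (simp_all add: min_def)
    have "N1 \<le> Lambda_hat \<alpha> l2" using H(3) l1 by (simp add: min_def split: if_splits)
    hence "0 \<le> marginal_payoff \<alpha> l2 N1" using marginal_payoff_sign(2)[OF H(2), of N1] N1 by simp
    moreover have "marginal_payoff \<alpha> l2 N1 < marginal_payoff \<alpha> N1 l2"
      using marginal_payoff_swap_less[OF H(2) l2(2)] .
    ultimately show False using Lambda_hat_root(2)[OF N1] l2(1) by simp
  qed
  note sym = nash_partial_imp_symmetric[OF N1 N12 ne this]
  have "l1 = L"
    using marginal_payoff_diag_single_crossing[of l1 L] marginal_payoff_diag_single_crossing[of L l1]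
      sym(2) H(1) L(1) D by (cases l1 L rule: linorder_cases) auto
  thus "l1 = L \<and> l2 = L" using sym(1) by simp
next
  assume "l1 = L \<and> l2 = L"
  moreover have "Lambda_hat \<alpha> L = L" using Lambda_hat_eqI[of L L] L D by simp
  ultimately show "is_nash \<alpha> N1 N2 l1 l2" using is_nash_iff L N12 by simp
qed

end

theorem theorem6:
  fixes \<alpha> N1 N2 :: real
  assumes "\<alpha> > 2" and "0 < N1" and "N1 \<le> N2"
  shows "(\<exists>!p. is_nash \<alpha> N1 N2 (fst p) (snd p)) \<and>
         (ereal N1 \<le> Lambda_pp \<alpha> \<and> N2 \<le> Lambda_hat \<alpha> N1 \<longrightarrow>
           is_nash \<alpha> N1 N2 N1 N2) \<and>
         (ereal N1 \<le> Lambda_pp \<alpha> \<and> N2 > Lambda_hat \<alpha> N1 \<longrightarrow>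
           is_nash \<alpha> N1 N2 N1 (Lambda_hat \<alpha> N1)) \<and>
         (ereal N1 > Lambda_pp \<alpha> \<longrightarrow>
           (\<exists>L. Lambda_pp \<alpha> = ereal L \<and> is_nash \<alpha> N1 N2 L L))"
proof -
  interpret path_loss_exponent \<alpha> using assms(1) by unfold_locales simp
  show ?thesis
  proof (cases "ereal N1 \<le> Lambda_pp \<alpha>")
    case True
    hence "0 \<le> marginal_payoff \<alpha> N1 N1" using marginal_payoff_diag_nonneg_iff assms(2) by simp
    note nash = nash_iff_full_reuse[OF assms this]
    show ?thesis using True ex1_pair_if_unique[OF nash] by (auto simp: nash min_def not_less[symmetric])
  next
    case False
    hence "\<alpha> > 4" by (auto simp: Lambda_pp_def split: if_splits)
    then obtain L where L: "0 < L" "Lambda_pp \<alpha> = ereal L" "marginal_payoff \<alpha> L L = 0"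
      using Lambda_pp_eq by blast
    hence "L < N1" using False by simp
    note nash = nash_iff_partial_reuse[OF assms(1) L(1) this assms(3) L(3)]
    show ?thesis using False L(2) ex1_pair_if_unique[OF nash] by (simp add: nash)
  qed
qed

end
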